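(* Let $\widetilde L$ be a standardized Laplacian matrix of order $n$, $P=\widetilde L+J$, $\widetilde L_c=K-\widetilde L$. Let $d$ be the in-forest dimension of the digraph $\Gamma$ of $\widetilde L$ and $d_c$ the in-forest dimension of the complementary digraph $\Gamma_c$. For a matrix $A$ let $m_A(\lambda)$ be the algebraic multiplicity of $\lambda$ as an eigenvalue of $A$ (zero if $\lambda\notin\operatorname{sp}A$) and $V_A(\lambda)$ the eigenspace of $A$ for $\lambda$. Then: (i) $m_{\widetilde L}(0)=d$, $m_{\widetilde L}(1)=d_c-1$; (ii) $m_P(0)=d-1$, $m_P(1)=d_c$; (iii) $m_{\widetilde L_c}(1)=d-1$, $m_{\widetilde L_c}(0)=d_c$; and each of these eigenvalues (whenever its multiplicity is positive) is semisimple; (iv) if $v\in V_{\widetilde L}(0)$ and $Kv\ne0$, then $Kv\in V_P(0)=V_{\widetilde L_c}(1)$; if $x\in V_P(1)=V_{\widetilde L_c}(0)$ and $Kx\ne0$, then $Kx\in V_{\widetilde L}(1)$.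
   Context: A standardized Laplacian matrix of order $n$ is a real $n\times n$ matrix whose row sums are all $0$ and whose off-diagonal entries are nonpositive with absolute value at most $1/n$. $J$ is the $n\times n$ matrix with all entries $1/n$, and $K=I-J$. The digraph $\Gamma$ of $\widetilde L=[\widetilde l_{ij}]$ has vertex set $\{1,\dots,n\}$ and an arc $i\to j$ ($j\ne i$) iff $\widetilde l_{ij}\ne0$; the complementary digraph $\Gamma_c$ has an arc $i\to j$ ($j\ne i$) iff $\widetilde l_{ij}\ne-1/n$ (it is the digraph of $\widetilde L_c$). A converging tree is a rooted directed tree containing a directed path from every vertex to the root; an in-forest of a digraph is a spanning subgraph whose weak components are converging trees; the in-forest dimension is the minimum number of trees in an in-forest. *)

theory Defs
  imports "Jordan_Normal_Form.Jordan_Normal_Form_Uniqueness"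
begin

(* Matrices of order n are real n x n matrices of type real mat in carrier_mat n n;
   indices/vertices are 0..n-1 instead of 1..n. *)

definition Jmat :: "nat \<Rightarrow> real mat" where
  "Jmat n = mat n n (\<lambda>_. 1 / real n)"

definition Kmat :: "nat \<Rightarrow> real mat" where
  "Kmat n = 1\<^sub>m n - Jmat n"

definition standardized_laplacian :: "nat \<Rightarrow> real mat \<Rightarrow> bool" where
  "standardized_laplacian n L \<longleftrightarrow>
     L \<in> carrier_mat n n \<and>
     (\<forall>i<n. (\<Sum>j<n. L $$ (i, j)) = 0) \<and>
     (\<forall>i<n. \<forall>j<n. i \<noteq> j \<longrightarrow> L $$ (i, j) \<le> 0 \<and> \<bar>L $$ (i, j)\<bar> \<le> 1 / real n)"

definition digraph_of :: "nat \<Rightarrow> real mat \<Rightarrow> (nat \<times> nat) set" where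
  "digraph_of n L = {(i, j). i < n \<and> j < n \<and> i \<noteq> j \<and> L $$ (i, j) \<noteq> 0}"

definition compl_digraph_of :: "nat \<Rightarrow> real mat \<Rightarrow> (nat \<times> nat) set" where
  "compl_digraph_of n L = {(i, j). i < n \<and> j < n \<and> i \<noteq> j \<and> L $$ (i, j) \<noteq> - 1 / real n}"

definition weak_components :: "nat \<Rightarrow> (nat \<times> nat) set \<Rightarrow> nat set set" where
  "weak_components n F = {0..<n} // ((F \<union> F\<inverse>)\<^sup>*)"

(* (C, T) is a converging tree: a rooted directed tree (weakly connected, |T| = |C| - 1,
   i.e. underlying graph is a tree) with a directed path from every vertex to the root *)
definition converging_tree :: "nat set \<Rightarrow> (nat \<times> nat) set \<Rightarrow> bool" where
  "converging_tree C T \<longleftrightarrow>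
     finite C \<and> C \<noteq> {} \<and> T \<subseteq> C \<times> C \<and>
     (\<forall>u\<in>C. \<forall>v\<in>C. (u, v) \<in> (T \<union> T\<inverse>)\<^sup>*) \<and>
     card T = card C - 1 \<and>
     (\<exists>r\<in>C. \<forall>v\<in>C. (v, r) \<in> T\<^sup>*)"

definition in_forest :: "nat \<Rightarrow> (nat \<times> nat) set \<Rightarrow> (nat \<times> nat) set \<Rightarrow> bool" where
  "in_forest n E F \<longleftrightarrow> F \<subseteq> E \<and>
     (\<forall>C \<in> weak_components n F. converging_tree C (F \<inter> (C \<times> C)))"

definition in_forest_dim :: "nat \<Rightarrow> (nat \<times> nat) set \<Rightarrow> nat" where
  "in_forest_dim n E = Min {card (weak_components n F) | F. in_forest n E F}"

definition alg_mult :: "real mat \<Rightarrow> real \<Rightarrow> nat" where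
  "alg_mult A ev = Polynomial.order ev (char_poly A)"

definition geom_mult :: "real mat \<Rightarrow> real \<Rightarrow> nat" where
  "geom_mult A ev = kernel_dim (char_matrix A ev)"

definition semisimple_eigenvalue :: "real mat \<Rightarrow> real \<Rightarrow> bool" where
  "semisimple_eigenvalue A ev \<longleftrightarrow> geom_mult A ev = alg_mult A ev"

definition eigenspace :: "real mat \<Rightarrow> real \<Rightarrow> real vec set" where
  "eigenspace A ev = {v \<in> carrier_vec (dim_col A). A *\<^sub>v v = ev \<cdot>\<^sub>v v}"

end

theory Submission
  imports Defs
begin

(* Let E be the digraph of L.  Call R a reaching set if every vertex has a directed
   E-path into R.  The proof combines three ingredients.
   (1) Combinatorics: the in-forest dimension of E is the least size of a reaching set
       (the roots of an in-forest form a reaching set; conversely, letting every vertex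
       outside a reaching set R step to a neighbour closer to R yields an in-forest
       with exactly one tree per element of R).
   (2) A maximum principle: a vector x with (L x)_a = 0 off a minimal reaching set R
       is constant along paths leaving R and is determined by its values on R.  Hence
       ker L has a basis indexed by R, ker L^2 = ker L, dim ker (L + J) = |R| - 1, and a
       factorisation of det (lambda I - L) shows that 0 has algebraic multiplicity |R|.
   (3) lambda * chi_{L+J} = (lambda - 1) * chi_L, transferring multiplicities to P.
   Since Lc = K - L is again a standardized Laplacian with digraph Gamma_c and
   Lc = I - P, Lc + J = I - L, everything about the eigenvalue 1 follows from the
   eigenvalue 0 by the reflection lambda -> 1 - lambda.  Part (iv) comes from
   P K = L K = L. *)

lemma mult_mat_vec_sum:
  "A \<in> carrier_mat n m \<Longrightarrow> x \<in> carrier_vec m \<Longrightarrow> i < n \<Longrightarrow>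
   (A *\<^sub>v x) $ i = (\<Sum>j<m. A $$ (i,j) * x $ j)"
  by (auto simp: scalar_prod_def lessThan_atLeast0 intro!: sum.cong)

lemma mult_mat_sum:
  assumes "A \<in> carrier_mat n m" "B \<in> carrier_mat m k" "i < n" "j < k"
  shows "(A * B) $$ (i,j) = (\<Sum>l<m. A $$ (i,l) * B $$ (l,j))"
  using assms by (auto simp: scalar_prod_def lessThan_atLeast0 intro!: sum.cong)

lemma mult_mat_vec_uminus:
  fixes A :: "real mat"
  assumes A: "A \<in> carrier_mat n m" and x: "x \<in> carrier_vec m"
  shows "A *\<^sub>v (- x) = - (A *\<^sub>v x)"
proof -
  have "- x = (-1) \<cdot>\<^sub>v x" using x by auto
  hence "A *\<^sub>v (- x) = (-1) \<cdot>\<^sub>v (A *\<^sub>v x)" using mult_mat_vec[OF A x] by simp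
  thus ?thesis by auto
qed

lemma det_diagonal:
  fixes d :: "nat \<Rightarrow> 'a :: comm_ring_1"
  shows "det (mat n n (\<lambda>(i,j). if i = j then d j else 0)) = (\<Prod>j<n. d j)"
proof -
  have "upper_triangular (mat n n (\<lambda>(i,j). if i = j then d j else 0))"
    unfolding upper_triangular_def by auto
  hence "det (mat n n (\<lambda>(i,j). if i = j then d j else 0))
      = (\<Prod>i = 0..<n. (if i = i then d i else 0))"
    by (subst det_upper_triangular[of _ n]) (auto simp: prod_list_diag_prod)
  thus ?thesis by (simp add: lessThan_atLeast0)
qed

lemma vec_eq_iff_index:
  "v \<in> carrier_vec n \<Longrightarrow> w \<in> carrier_vec n \<Longrightarrow> v = w \<longleftrightarrow> (\<forall>i<n. v $ i = w $ i)"
  by (auto intro: eq_vecI)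

(* Kernel dimension from a "pivot basis": kernel vectors f i that are Kronecker deltas at
   pivot coordinates p j and recover every kernel vector from its pivot coordinates. *)
lemma pivot_family_inj:
  assumes delta: "\<And>i j. i \<in> I \<Longrightarrow> j \<in> I \<Longrightarrow> f i $ p j = (if i = j then 1 else (0::'a::field))"
  shows "inj_on f I"
proof
  fix i j assume ij: "i \<in> I" "j \<in> I" "f i = f j"
  have "f i $ p j = 1" using ij delta[of j j] by simp
  with delta[of i j] ij show "i = j" by (auto split: if_splits)
qed

context kernel
begin

lemma pivot_family_lin_indpt:
  assumes I: "finite I" and fk: "f ` I \<subseteq> mat_kernel A"
    and delta: "\<And>i j. i \<in> I \<Longrightarrow> j \<in> I \<Longrightarrow> f i $ p j = (if i = j then 1 else 0)"
    and p: "\<And>i. i \<in> I \<Longrightarrow> p i < nc"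
  shows "lin_indpt (f ` I)"
proof (rule Ker.finite_lin_indpt2[OF finite_imageI[OF I] fk], goal_cases)
  case (1 a)
  show ?case
  proof
    fix v assume "v \<in> f ` I"
    then obtain j where j: "j \<in> I" "v = f j" by auto
    have "0 = lincomb a (f ` I) $ p j" using 1(2) p[OF j(1)] by simp
    also have "\<dots> = (\<Sum>i\<in>I. a (f i) * f i $ p j)"
      using lincomb_index[OF p[OF j(1)] fk] sum.reindex[OF pivot_family_inj[OF delta]] by simp
    also have "\<dots> = (\<Sum>i\<in>I. if i = j then a (f i) else 0)"
      by (rule sum.cong) (simp_all add: delta j(1))
    also have "\<dots> = a (f j)" using j(1) I by simp
    finally show "a v = 0" using j by simp
  qed
qed

lemma pivot_family_span:
  assumes I: "finite I" and fk: "f ` I \<subseteq> mat_kernel A"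
    and delta: "\<And>i j. i \<in> I \<Longrightarrow> j \<in> I \<Longrightarrow> f i $ p j = (if i = j then 1 else 0)"
    and span: "\<And>v l. v \<in> mat_kernel A \<Longrightarrow> l < nc \<Longrightarrow> v $ l = (\<Sum>i\<in>I. v $ p i * f i $ l)"
  shows "span (f ` I) = mat_kernel A"
proof
  show "span (f ` I) \<subseteq> mat_kernel A"
    using Ker.span_is_submodule[OF fk] unfolding submodule_def by auto
  show "mat_kernel A \<subseteq> span (f ` I)"
  proof
    fix v assume v: "v \<in> mat_kernel A"
    have inj: "inj_on f I" by (rule pivot_family_inj[OF delta])
    define a where "a = (\<lambda>x. v $ p (the_inv_into I f x))"
    have vc: "v \<in> carrier_vec nc" using v mat_kernel_carrier A by blast
    have "lincomb a (f ` I) \<in> mat_kernel A" using Ker.lincomb_closed[OF fk] by auto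
    hence lc: "lincomb a (f ` I) \<in> carrier_vec nc" using mat_kernel_carrier A by blast
    have "lincomb a (f ` I) = v"
    proof (rule eq_vecI)
      fix l assume "l < dim_vec v"
      hence l: "l < nc" using vc by auto
      have "lincomb a (f ` I) $ l = (\<Sum>i\<in>I. a (f i) * f i $ l)"
        using lincomb_index[OF l fk] sum.reindex[OF inj] by simp
      also have "\<dots> = (\<Sum>i\<in>I. v $ p i * f i $ l)"
        by (rule sum.cong) (simp_all add: a_def the_inv_into_f_f[OF inj])
      finally show "lincomb a (f ` I) $ l = v $ l" using span[OF v l] by simp
    qed (use lc vc in auto)
    thus "v \<in> span (f ` I)" using Ker.finite_span[OF finite_imageI[OF I] fk] by auto
  qed
qed

end

lemma kernel_dim_pivot:
  fixes A :: "'a::field mat"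
  assumes A: "A \<in> carrier_mat nr nc" and I: "finite I"
    and fk: "\<And>i. i \<in> I \<Longrightarrow> f i \<in> mat_kernel A"
    and p: "\<And>i. i \<in> I \<Longrightarrow> p i < nc"
    and delta: "\<And>i j. i \<in> I \<Longrightarrow> j \<in> I \<Longrightarrow> f i $ p j = (if i = j then 1 else 0)"
    and span: "\<And>v l. v \<in> mat_kernel A \<Longrightarrow> l < nc \<Longrightarrow> v $ l = (\<Sum>i\<in>I. v $ p i * f i $ l)"
  shows "kernel_dim A = card I"
proof -
  interpret K: kernel nr nc A by unfold_locales (rule A)
  have fk': "f ` I \<subseteq> mat_kernel A" using fk by auto
  have "K.Ker.basis (f ` I)"
    unfolding K.Ker.basis_def
    using K.pivot_family_lin_indpt[OF I fk' delta p] K.pivot_family_span[OF I fk' delta span] fk'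
    by auto
  hence "K.dim = card (f ` I)" using K.Ker.dim_basis[OF finite_imageI[OF I]] by auto
  thus ?thesis using card_image[OF pivot_family_inj[OF delta]] by simp
qed

lemma kernel_dim_uminus:
  fixes A :: "'a::field mat"
  assumes A: "A \<in> carrier_mat n n"
  shows "kernel_dim (- A) = kernel_dim A"
proof -
  have "mat_kernel (- A) = mat_kernel A"
    using A unfolding mat_kernel_def by (auto simp: uminus_zero_vec_eq)
  thus ?thesis using A by (simp add: kernel_dim_def)
qed

lemma char_matrix_0: "(A :: real mat) \<in> carrier_mat n n \<Longrightarrow> char_matrix A 0 = A"
  by (rule eq_matI) (auto simp: char_matrix_def)

lemma char_poly_nonzero: "A \<in> carrier_mat n n \<Longrightarrow> char_poly A \<noteq> 0"
  using degree_monic_char_poly[of A n] by auto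

definition lambda_minus :: "nat \<Rightarrow> real \<Rightarrow> real mat \<Rightarrow> real mat" where
  "lambda_minus n lam A = mat n n (\<lambda>(i,j). (if i = j then lam else 0) - A $$ (i,j))"

lemma lambda_minus_carrier[simp]: "lambda_minus n lam A \<in> carrier_mat n n"
  and lambda_minus_dims[simp]: "dim_row (lambda_minus n lam A) = n" "dim_col (lambda_minus n lam A) = n"
  unfolding lambda_minus_def by auto

lemma poly_char_poly:
  assumes A: "(A :: real mat) \<in> carrier_mat n n"
  shows "poly (char_poly A) lam = det (lambda_minus n lam A)"
proof -
  have "- char_matrix A lam = lambda_minus n lam A"
    by (rule eq_matI) (use A in \<open>auto simp: char_matrix_def lambda_minus_def\<close>)
  thus ?thesis using char_poly_matrix[OF A] by simp
qed

section \<open>The reflection lambda \<mapsto> 1 - lambda\<close>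

lemma order_reflect_le:
  fixes p :: "real poly"
  assumes nz: "pcompose p [:b, -1:] \<noteq> 0"
  shows "Polynomial.order (b - a) p \<le> Polynomial.order a (pcompose p [:b, -1:])"
proof -
  define m where "m = Polynomial.order (b - a) p"
  have "[:-(b - a), 1:] ^ m dvd p" unfolding m_def by (rule order_1)
  then obtain e where pe: "p = [:-(b - a), 1:] ^ m * e" by (auto elim: dvdE)
  have lin: "pcompose [:-(b - a), 1:] [:b, -1:] = Polynomial.smult (-1) [:-a, 1:]"
    by (simp add: pcompose_pCons)
  have power: "pcompose (q ^ k) r = (pcompose q r) ^ k" for q r :: "real poly" and k
    by (induct k) (auto simp: pcompose_mult)
  have "pcompose p [:b, -1:] = Polynomial.smult ((-1) ^ m) ([:-a, 1:] ^ m) * pcompose e [:b, -1:]"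
    unfolding pe pcompose_mult power lin smult_power ..
  hence "[:-a, 1:] ^ m dvd pcompose p [:b, -1:]"
    by (metis dvd_smult dvd_triv_left mult_smult_left)
  thus ?thesis using nz unfolding m_def by (simp add: order_divides)
qed

lemma pcompose_reflect_twice: "pcompose (pcompose p [:b, -1:]) [:b, -1::real:] = p"
proof -
  have "pcompose [:b, -1:] [:b, -1::real:] = [:0, 1:]" by (simp add: pcompose_pCons)
  thus ?thesis by (metis pcompose_assoc pcompose_idR)
qed

lemma order_reflect:
  fixes p :: "real poly"
  assumes nz: "p \<noteq> 0"
  shows "Polynomial.order a (pcompose p [:b, -1:]) = Polynomial.order (b - a) p"
proof -
  have nz': "pcompose p [:b, -1:] \<noteq> 0" using nz pcompose_reflect_twice[of p b] by auto
  have "Polynomial.order (b - (b - a)) (pcompose p [:b, -1:])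
      \<le> Polynomial.order (b - a) (pcompose (pcompose p [:b, -1:]) [:b, -1:])"
    by (rule order_reflect_le) (unfold pcompose_reflect_twice, rule nz)
  thus ?thesis using order_reflect_le[OF nz', of a] unfolding pcompose_reflect_twice by simp
qed

lemma char_poly_reflect:
  assumes A: "(A :: real mat) \<in> carrier_mat n n"
  shows "char_poly (1\<^sub>m n - A) = Polynomial.smult ((-1) ^ n) (pcompose (char_poly A) [:1, -1:])"
proof -
  have B: "1\<^sub>m n - A \<in> carrier_mat n n" using A by (rule minus_carrier_mat)
  have "poly (char_poly (1\<^sub>m n - A)) lam
      = poly (Polynomial.smult ((-1) ^ n) (pcompose (char_poly A) [:1, -1:])) lam" for lam
  proof -
    have "lambda_minus n lam (1\<^sub>m n - A) = (-1) \<cdot>\<^sub>m lambda_minus n (1 - lam) A"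
      by (rule eq_matI) (use A in \<open>auto simp: lambda_minus_def\<close>)
    thus ?thesis
      using poly_char_poly[OF B, of lam] poly_char_poly[OF A, of "1 - lam"]
      by (simp add: poly_pcompose)
  qed
  hence "poly (char_poly (1\<^sub>m n - A))
      = poly (Polynomial.smult ((-1) ^ n) (pcompose (char_poly A) [:1, -1:]))" by (rule ext)
  thus ?thesis by (simp add: poly_eq_poly_eq_iff)
qed

lemma alg_mult_reflect:
  assumes A: "A \<in> carrier_mat n n"
  shows "alg_mult (1\<^sub>m n - A) ev = alg_mult A (1 - ev)"
proof -
  have "alg_mult (1\<^sub>m n - A) ev = Polynomial.order ev (pcompose (char_poly A) [:1, -1:])"
    unfolding alg_mult_def char_poly_reflect[OF A] by (simp add: order_smult)
  also have "\<dots> = Polynomial.order (1 - ev) (char_poly A)"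
    by (rule order_reflect[OF char_poly_nonzero[OF A]])
  finally show ?thesis unfolding alg_mult_def .
qed

lemma geom_mult_reflect:
  assumes A: "A \<in> carrier_mat n n"
  shows "geom_mult (1\<^sub>m n - A) ev = geom_mult A (1 - ev)"
proof -
  have "char_matrix (1\<^sub>m n - A) ev = - char_matrix A (1 - ev)"
    by (rule eq_matI) (use A in \<open>auto simp: char_matrix_def\<close>)
  thus ?thesis unfolding geom_mult_def using kernel_dim_uminus[of "char_matrix A (1 - ev)" n] A
    by simp
qed

lemma eigenspace_reflect:
  assumes A: "A \<in> carrier_mat n n"
  shows "eigenspace (1\<^sub>m n - A) ev = eigenspace A (1 - ev)"
proof -
  have "(1\<^sub>m n - A) *\<^sub>v v = ev \<cdot>\<^sub>v v \<longleftrightarrow> A *\<^sub>v v = (1 - ev) \<cdot>\<^sub>v v" if v: "v \<in> carrier_vec n" for v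
  proof -
    have "(1\<^sub>m n - A) *\<^sub>v v = v - A *\<^sub>v v"
      using minus_mult_distrib_mat_vec[OF one_carrier_mat A v] v by simp
    thus ?thesis using v A by (auto simp: vec_eq_iff_index[of _ n] algebra_simps)
  qed
  thus ?thesis using A unfolding eigenspace_def by auto
qed

section \<open>Reaching sets and in-forests\<close>

definition reaching :: "nat \<Rightarrow> (nat \<times> nat) set \<Rightarrow> nat set \<Rightarrow> bool" where
  "reaching n E R \<longleftrightarrow> R \<subseteq> {..<n} \<and> (\<forall>v<n. \<exists>r\<in>R. (v,r) \<in> E\<^sup>*)"

lemma path_to_first:
  assumes "(v,t) \<in> E\<^sup>*" "t \<in> R"
  shows "\<exists>r\<in>R. (v,r) \<in> {(a,b). (a,b) \<in> E \<and> a \<notin> R}\<^sup>*"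
  using assms
proof (induction rule: converse_rtrancl_induct)
  case (step v w)
  then obtain r where r: "r \<in> R" "(w,r) \<in> {(a,b). (a,b) \<in> E \<and> a \<notin> R}\<^sup>*" by auto
  show ?case
  proof (cases "v \<in> R")
    case False
    hence "(v,w) \<in> {(a,b). (a,b) \<in> E \<and> a \<notin> R}" using step by auto
    thus ?thesis using r by (meson converse_rtrancl_into_rtrancl)
  qed auto
qed auto

lemma weak_components_iff:
  "C \<in> weak_components n F \<longleftrightarrow> (\<exists>x<n. C = ((F \<union> F\<inverse>)\<^sup>*) `` {x})"
  unfolding weak_components_def quotient_def by auto

lemma sym_connected: "(a,b) \<in> (F \<union> F\<inverse>)\<^sup>* \<Longrightarrow> (b,a) \<in> (F \<union> F\<inverse>)\<^sup>*"
  using sym_rtrancl[of "F \<union> F\<inverse>"] unfolding sym_def by blast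

lemma connected_class_eq:
  assumes "y \<in> ((F \<union> F\<inverse>)\<^sup>*) `` {x}"
  shows "((F \<union> F\<inverse>)\<^sup>*) `` {y} = ((F \<union> F\<inverse>)\<^sup>*) `` {x}"
  using assms sym_connected[of x y F] by (auto intro: rtrancl_trans)

lemma weak_component_bounded:
  assumes F: "F \<subseteq> {..<n} \<times> {..<n}" and C: "C \<in> weak_components n F"
  shows "C \<subseteq> {..<n}"
proof -
  have "b < n" if "(a,b) \<in> (F \<union> F\<inverse>)\<^sup>*" "a < n" for a b
    using that by (induction rule: rtrancl_induct) (use F in auto)
  thus ?thesis using C unfolding weak_components_iff by auto
qed

lemma component_closed_path:
  assumes p: "(u,v) \<in> (F \<union> F\<inverse>)\<^sup>*" and u: "u \<in> C" and C: "C = ((F \<union> F\<inverse>)\<^sup>*) `` {x}"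
  shows "(u,v) \<in> ((F \<inter> C \<times> C) \<union> (F \<inter> C \<times> C)\<inverse>)\<^sup>* \<and> v \<in> C"
  using p
proof (induction rule: rtrancl_induct)
  case (step a b)
  hence a: "a \<in> C" and ua: "(u,a) \<in> ((F \<inter> C \<times> C) \<union> (F \<inter> C \<times> C)\<inverse>)\<^sup>*" by auto
  have "(x,b) \<in> (F \<union> F\<inverse>)\<^sup>*" using a C step(2) by (auto intro: rtrancl_into_rtrancl)
  hence b: "b \<in> C" using C by auto
  have "(a,b) \<in> (F \<inter> C \<times> C) \<union> (F \<inter> C \<times> C)\<inverse>" using step(2) a b by auto
  thus ?case using ua b by (meson rtrancl.rtrancl_into_rtrancl)
qed (use u in auto)

lemma component_closed_directed_path:
  assumes p: "(u,v) \<in> F\<^sup>*" and u: "u \<in> C" and C: "C = ((F \<union> F\<inverse>)\<^sup>*) `` {x}"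
  shows "(u,v) \<in> (F \<inter> C \<times> C)\<^sup>* \<and> v \<in> C"
  using p
proof (induction rule: rtrancl_induct)
  case (step a b)
  hence a: "a \<in> C" and ua: "(u,a) \<in> (F \<inter> C \<times> C)\<^sup>*" by auto
  have "(x,b) \<in> (F \<union> F\<inverse>)\<^sup>*" using a C step(2) by (auto intro: rtrancl_into_rtrancl)
  hence b: "b \<in> C" using C by auto
  thus ?case using ua step(2) a by (meson IntI mem_Sigma_iff rtrancl.rtrancl_into_rtrancl)
qed (use u in auto)

lemma weak_components_disjoint:
  assumes "C \<in> weak_components n F" "C' \<in> weak_components n F" "x \<in> C" "x \<in> C'"
  shows "C = C'"
  using assms connected_class_eq[of x F] unfolding weak_components_iff by metis

lemma in_forest_roots_reaching:
  assumes E: "E \<subseteq> {..<n} \<times> {..<n}" and forest: "in_forest n E F"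
  shows "\<exists>R. reaching n E R \<and> card R = card (weak_components n F)"
proof -
  define W where "W = weak_components n F"
  have FE: "F \<subseteq> E" using forest unfolding in_forest_def by auto
  hence F: "F \<subseteq> {..<n} \<times> {..<n}" using E by auto
  define root where "root C = (SOME r. r \<in> C \<and> (\<forall>v\<in>C. (v, r) \<in> (F \<inter> C \<times> C)\<^sup>*))" for C
  have root: "root C \<in> C \<and> (\<forall>v\<in>C. (v, root C) \<in> (F \<inter> C \<times> C)\<^sup>*)" if C: "C \<in> W" for C
  proof -
    have "converging_tree C (F \<inter> C \<times> C)" using forest C unfolding in_forest_def W_def by auto
    hence "\<exists>r. r \<in> C \<and> (\<forall>v\<in>C. (v, r) \<in> (F \<inter> C \<times> C)\<^sup>*)" unfolding converging_tree_def by auto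
    from someI_ex[OF this] show ?thesis unfolding root_def .
  qed
  have inj: "inj_on root W"
    using root weak_components_disjoint unfolding W_def by (metis inj_onI)
  have "reaching n E (root ` W)"
    unfolding reaching_def
  proof (intro conjI allI impI)
    show "root ` W \<subseteq> {..<n}" using root weak_component_bounded[OF F] unfolding W_def by blast
    fix v assume v: "v < n"
    define C where "C = ((F \<union> F\<inverse>)\<^sup>*) `` {v}"
    have C: "C \<in> W" unfolding W_def weak_components_iff C_def using v by auto
    have "(v, root C) \<in> (F \<inter> C \<times> C)\<^sup>*" using root[OF C] unfolding C_def by auto
    hence "(v, root C) \<in> E\<^sup>*" by (rule rtrancl_mono[THEN subsetD, rotated]) (use FE in auto)
    thus "\<exists>r\<in>root ` W. (v, r) \<in> E\<^sup>*" using C by auto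
  qed
  thus ?thesis using card_image[OF inj] unfolding W_def by auto
qed

(* Conversely, a reaching set R yields an in-forest with one tree per root: every vertex
   outside R moves to a neighbour strictly closer to R. *)
locale shortest_path_forest =
  fixes n :: nat and E :: "(nat \<times> nat) set" and R :: "nat set"
  assumes E: "E \<subseteq> {..<n} \<times> {..<n}"
    and reaching_R: "reaching n E R"
begin

lemma R_bounded: "R \<subseteq> {..<n}" using reaching_R unfolding reaching_def by auto

definition depth :: "nat \<Rightarrow> nat" where
  "depth v = (LEAST k. \<exists>r\<in>R. (v,r) \<in> E ^^ k)"

lemma depth_path: assumes v: "v < n" shows "\<exists>r\<in>R. (v,r) \<in> E ^^ depth v"
proof -
  obtain r where r: "r \<in> R" "(v,r) \<in> E\<^sup>*" using reaching_R v unfolding reaching_def by auto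
  then obtain k where "(v,r) \<in> E ^^ k" using rtrancl_power by blast
  hence "\<exists>k. \<exists>r\<in>R. (v,r) \<in> E ^^ k" using r by auto
  from LeastI_ex[OF this] show ?thesis unfolding depth_def .
qed

lemma closer_neighbour: assumes v: "v < n" "v \<notin> R"
  shows "\<exists>w. (v,w) \<in> E \<and> depth w < depth v"
proof -
  obtain r where r: "r \<in> R" "(v,r) \<in> E ^^ depth v" using depth_path[OF v(1)] by auto
  show ?thesis
  proof (cases "depth v")
    case 0 thus ?thesis using r v by auto
  next
    case (Suc m)
    then obtain w where w: "(v,w) \<in> E" "(w,r) \<in> E ^^ m" using r relpow_Suc_D2 by metis
    have "depth w \<le> m" unfolding depth_def by (rule Least_le) (use r(1) w(2) in auto)
    thus ?thesis using w Suc by auto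
  qed
qed

definition next_vertex :: "nat \<Rightarrow> nat" where
  "next_vertex v = (SOME w. (v,w) \<in> E \<and> depth w < depth v)"

lemma next_vertex: "v < n \<Longrightarrow> v \<notin> R \<Longrightarrow> (v, next_vertex v) \<in> E \<and> depth (next_vertex v) < depth v"
  unfolding next_vertex_def by (rule someI_ex, rule closer_neighbour)

definition arcs :: "(nat \<times> nat) set" where
  "arcs = {(v, next_vertex v) | v. v < n \<and> v \<notin> R}"

abbreviation connected :: "(nat \<times> nat) set" where
  "connected \<equiv> (arcs \<union> arcs\<inverse>)\<^sup>*"

lemma arcs_iff: "(a,b) \<in> arcs \<longleftrightarrow> a < n \<and> a \<notin> R \<and> b = next_vertex a"
  unfolding arcs_def by auto

lemma arcs_subset: "arcs \<subseteq> E" using next_vertex unfolding arcs_def by auto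

lemma arcs_bounded: "arcs \<subseteq> {..<n} \<times> {..<n}" using arcs_subset E by auto

lemma arcs_reach_roots: "v < n \<Longrightarrow> \<exists>r\<in>R. (v,r) \<in> arcs\<^sup>*"
proof (induction "depth v" arbitrary: v rule: less_induct)
  case less
  show ?case
  proof (cases "v \<in> R")
    case False
    have "(v, next_vertex v) \<in> arcs" using less(2) False unfolding arcs_iff by auto
    moreover obtain r where "r \<in> R" "(next_vertex v, r) \<in> arcs\<^sup>*"
      using less(1) next_vertex[OF less(2) False] E by blast
    ultimately show ?thesis by (meson converse_rtrancl_into_rtrancl)
  qed auto
qed

(* Each vertex outside R has exactly one outgoing arc, so it reaches a unique root. *)
lemma root_unique:
  assumes p1: "(v,r1) \<in> arcs\<^sup>*" and r1: "r1 \<in> R" and p2: "(v,r2) \<in> arcs\<^sup>*" and r2: "r2 \<in> R"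
  shows "r1 = r2"
  using p1 p2 r2
proof (induction arbitrary: r2 rule: converse_rtrancl_induct)
  case base
  thus ?case using r1 by (metis arcs_iff converse_rtranclE)
next
  case (step v w)
  from step(4) show ?case
  proof (cases rule: converse_rtranclE)
    case base thus ?thesis using step(1,5) arcs_iff by auto
  next
    case (step w')
    hence "w' = w" using \<open>(v,w) \<in> arcs\<close> unfolding arcs_iff by auto
    thus ?thesis using step \<open>r2 \<in> R\<close> \<open>\<And>r2. (w,r2) \<in> arcs\<^sup>* \<Longrightarrow> r2 \<in> R \<Longrightarrow> r1 = r2\<close> by auto
  qed
qed

definition root_of :: "nat \<Rightarrow> nat" where
  "root_of v = (THE r. r \<in> R \<and> (v,r) \<in> arcs\<^sup>*)"

lemma root_of: assumes "v < n" shows "root_of v \<in> R \<and> (v, root_of v) \<in> arcs\<^sup>*"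
proof -
  have "\<exists>!r. r \<in> R \<and> (v,r) \<in> arcs\<^sup>*" using arcs_reach_roots[OF assms] root_unique by blast
  from theI'[OF this] show ?thesis unfolding root_of_def .
qed

lemma root_of_eq: "r \<in> R \<Longrightarrow> (v,r) \<in> arcs\<^sup>* \<Longrightarrow> v < n \<Longrightarrow> root_of v = r"
  using root_unique root_of by blast

lemma root_of_root: "r \<in> R \<Longrightarrow> root_of r = r"
  using root_of_eq[of r r] R_bounded by auto

lemma root_of_arc: assumes "(a,b) \<in> arcs" shows "root_of a = root_of b"
proof -
  have ab: "a < n" "b < n" using assms arcs_bounded by auto
  have "(a, root_of b) \<in> arcs\<^sup>*" using assms root_of[OF ab(2)] by (meson converse_rtrancl_into_rtrancl)
  thus ?thesis using root_of_eq[OF _ _ ab(1)] root_of[OF ab(2)] by auto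
qed

lemma root_of_connected: "(a,b) \<in> connected \<Longrightarrow> root_of a = root_of b"
  by (induction rule: rtrancl_induct) (auto dest: root_of_arc)

lemma component_root:
  assumes C: "C \<in> weak_components n arcs"
  shows "\<exists>r. C \<inter> R = {r} \<and> C = connected `` {r}"
proof -
  obtain x where x: "x < n" "C = connected `` {x}" using C unfolding weak_components_iff by auto
  have r: "root_of x \<in> R" "(x, root_of x) \<in> arcs\<^sup>*" using root_of[OF x(1)] by auto
  have "(x, root_of x) \<in> connected" by (rule rtrancl_mono[THEN subsetD, OF _ r(2)]) auto
  hence rC: "root_of x \<in> C" using x(2) by auto
  have "C \<inter> R = {root_of x}"
  proof (intro equalityI subsetI)
    fix r' assume r': "r' \<in> C \<inter> R"
    hence "root_of x = root_of r'" using x(2) root_of_connected by auto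
    thus "r' \<in> {root_of x}" using root_of_root r' by auto
  qed (use rC r in auto)
  moreover have "C = connected `` {root_of x}" using connected_class_eq[of "root_of x" arcs x] rC x by auto
  ultimately show ?thesis by auto
qed

lemma component_tree_arcs:
  assumes C: "C \<in> weak_components n arcs" and r: "C \<inter> R = {r}" "C = connected `` {r}"
  shows "card (arcs \<inter> C \<times> C) = card C - 1"
proof -
  have Cn: "C \<subseteq> {..<n}" by (rule weak_component_bounded[OF arcs_bounded C])
  have "arcs \<inter> C \<times> C = (\<lambda>v. (v, next_vertex v)) ` (C - R)"
  proof (intro equalityI subsetI)
    fix e assume "e \<in> (\<lambda>v. (v, next_vertex v)) ` (C - R)"
    then obtain v where v: "v \<in> C" "v \<notin> R" "e = (v, next_vertex v)" by auto
    have "(v, next_vertex v) \<in> arcs" using v Cn unfolding arcs_iff by auto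
    thus "e \<in> arcs \<inter> C \<times> C"
      using component_closed_directed_path[OF _ v(1) r(2)] v by blast
  qed (auto simp: arcs_iff)
  hence "card (arcs \<inter> C \<times> C) = card (C - R)" by (simp add: card_image inj_on_def)
  also have "C - R = C - {r}" using r(1) by auto
  also have "card (C - {r}) = card C - 1" using r Cn finite_subset by fastforce
  finally show ?thesis .
qed

lemma in_forest_arcs: "in_forest n E arcs"
  unfolding in_forest_def
proof (intro conjI ballI)
  show "arcs \<subseteq> E" by (rule arcs_subset)
  fix C assume C: "C \<in> weak_components n arcs"
  obtain r where r: "C \<inter> R = {r}" "C = connected `` {r}" using component_root[OF C] by auto
  have Cn: "C \<subseteq> {..<n}" by (rule weak_component_bounded[OF arcs_bounded C])
  have rC: "r \<in> C" "r \<in> R" using r by auto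
  show "converging_tree C (arcs \<inter> C \<times> C)"
    unfolding converging_tree_def
  proof (intro conjI)
    show "finite C" using Cn finite_subset by blast
    show "card (arcs \<inter> C \<times> C) = card C - 1" by (rule component_tree_arcs[OF C r])
    show "\<forall>u\<in>C. \<forall>v\<in>C. (u, v) \<in> ((arcs \<inter> C \<times> C) \<union> (arcs \<inter> C \<times> C)\<inverse>)\<^sup>*"
    proof (intro ballI)
      fix u v assume u: "u \<in> C" and v: "v \<in> C"
      have "(u,r) \<in> connected" "(r,v) \<in> connected" using u v r(2) sym_connected by auto
      hence "(u,v) \<in> connected" by (rule rtrancl_trans)
      thus "(u, v) \<in> ((arcs \<inter> C \<times> C) \<union> (arcs \<inter> C \<times> C)\<inverse>)\<^sup>*"
        using component_closed_path[OF _ u r(2)] by auto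
    qed
    show "\<exists>r\<in>C. \<forall>v\<in>C. (v, r) \<in> (arcs \<inter> C \<times> C)\<^sup>*"
    proof (intro bexI[of _ r] ballI)
      fix v assume v: "v \<in> C"
      have "(r,v) \<in> connected" using v r(2) by auto
      hence "root_of v = r" using root_of_connected root_of_root[OF rC(2)] by metis
      hence "(v, r) \<in> arcs\<^sup>*" using root_of v Cn by auto
      thus "(v, r) \<in> (arcs \<inter> C \<times> C)\<^sup>*" using component_closed_directed_path[OF _ v r(2)] by auto
    qed (rule rC(1))
    show "C \<noteq> {}" using rC by auto
    show "arcs \<inter> C \<times> C \<subseteq> C \<times> C" by auto
  qed
qed

lemma card_components: "card (weak_components n arcs) = card R"
proof -
  have "weak_components n arcs = (\<lambda>r. connected `` {r}) ` R"
  proof (intro equalityI subsetI)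
    fix C assume "C \<in> weak_components n arcs"
    thus "C \<in> (\<lambda>r. connected `` {r}) ` R" using component_root by blast
  next
    fix C assume "C \<in> (\<lambda>r. connected `` {r}) ` R"
    then obtain r where "r \<in> R" "C = connected `` {r}" by auto
    thus "C \<in> weak_components n arcs" unfolding weak_components_iff using R_bounded by auto
  qed
  moreover have "inj_on (\<lambda>r. connected `` {r}) R"
  proof
    fix r1 r2 assume r: "r1 \<in> R" "r2 \<in> R" and eq: "connected `` {r1} = connected `` {r2}"
    have "r2 \<in> connected `` {r1}" using eq by auto
    hence "root_of r1 = root_of r2" using root_of_connected by auto
    thus "r1 = r2" using root_of_root r by auto
  qed
  ultimately show ?thesis by (simp add: card_image)
qed

end

lemma in_forest_dim_eq_min_reaching:
  assumes E: "E \<subseteq> {..<n} \<times> {..<n}" and R: "reaching n E R"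
    and min: "\<And>R'. reaching n E R' \<Longrightarrow> card R \<le> card R'"
  shows "in_forest_dim n E = card R"
proof -
  define sizes where "sizes = {card (weak_components n F) | F. in_forest n E F}"
  interpret shortest_path_forest n E R by unfold_locales (rule E, rule R)
  have mem: "card R \<in> sizes" unfolding sizes_def using in_forest_arcs card_components[symmetric] by blast
  have bound: "card R \<le> s \<and> s \<le> n" if s: "s \<in> sizes" for s
  proof -
    obtain F where F: "in_forest n E F" "s = card (weak_components n F)"
      using s unfolding sizes_def by blast
    obtain R' where R': "reaching n E R'" "card R' = s"
      using in_forest_roots_reaching[OF E F(1)] F by auto
    have "card R' \<le> card {..<n}" using R' unfolding reaching_def by (intro card_mono) auto
    thus ?thesis using min[OF R'(1)] R' by auto
  qed
  have "finite sizes" by (rule finite_subset[of _ "{..n}"]) (use bound in auto)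
  hence "Min sizes = card R" by (intro Min_eqI) (use bound mem in auto)
  thus ?thesis unfolding in_forest_dim_def sizes_def by simp
qed

section \<open>Standardized Laplacians\<close>

lemma laplacian_carrier: "standardized_laplacian n L \<Longrightarrow> L \<in> carrier_mat n n"
  unfolding standardized_laplacian_def by auto

lemma laplacian_row_sum:
  "standardized_laplacian n L \<Longrightarrow> i < n \<Longrightarrow> (\<Sum>j<n. L $$ (i, j)) = 0"
  unfolding standardized_laplacian_def by auto

lemma laplacian_offdiag_nonpos:
  "standardized_laplacian n L \<Longrightarrow> i < n \<Longrightarrow> j < n \<Longrightarrow> i \<noteq> j \<Longrightarrow> L $$ (i, j) \<le> 0"
  unfolding standardized_laplacian_def by auto

lemma digraph_of_iff: "(i,j) \<in> digraph_of n L \<longleftrightarrow> i < n \<and> j < n \<and> i \<noteq> j \<and> L $$ (i,j) \<noteq> 0"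
  unfolding digraph_of_def by auto

lemma digraph_of_bounded: "digraph_of n L \<subseteq> {..<n} \<times> {..<n}"
  unfolding digraph_of_def by auto

lemma laplacian_mult_vec_diff:
  assumes std: "standardized_laplacian n L" and x: "x \<in> carrier_vec n" and i: "i < n"
  shows "(L *\<^sub>v x) $ i = (\<Sum>j<n. L $$ (i,j) * (x $ j - x $ i))"
proof -
  have "(L *\<^sub>v x) $ i = (\<Sum>j<n. L $$ (i,j) * x $ j) - x $ i * (\<Sum>j<n. L $$ (i, j))"
    using mult_mat_vec_sum[OF laplacian_carrier[OF std] x i] laplacian_row_sum[OF std i] by simp
  also have "\<dots> = (\<Sum>j<n. L $$ (i,j) * (x $ j - x $ i))"
    by (simp add: sum_distrib_left sum_subtractf algebra_simps)
  finally show ?thesis .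
qed

lemma laplacian_local_max:
  assumes std: "standardized_laplacian n L" and x: "x \<in> carrier_vec n" and i: "i < n"
    and nb: "\<And>j. (i,j) \<in> digraph_of n L \<Longrightarrow> x $ j \<le> x $ i"
  shows "(L *\<^sub>v x) $ i \<ge> 0"
    and "(L *\<^sub>v x) $ i = 0 \<Longrightarrow> (i,j) \<in> digraph_of n L \<Longrightarrow> x $ j = x $ i"
proof -
  have nonneg: "L $$ (i,j) * (x $ j - x $ i) \<ge> 0" if j: "j < n" for j
  proof (cases "(i,j) \<in> digraph_of n L")
    case True
    hence "L $$ (i,j) \<le> 0" "x $ j - x $ i \<le> 0"
      using laplacian_offdiag_nonpos[OF std i j] nb by (auto simp: digraph_of_iff)
    thus ?thesis by (simp add: mult_nonpos_nonpos)
  qed (use i j in \<open>auto simp: digraph_of_iff\<close>)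
  show "(L *\<^sub>v x) $ i \<ge> 0"
    unfolding laplacian_mult_vec_diff[OF std x i] by (rule sum_nonneg) (use nonneg in auto)
  assume "(L *\<^sub>v x) $ i = 0" and ij: "(i,j) \<in> digraph_of n L"
  hence "\<forall>j\<in>{..<n}. L $$ (i,j) * (x $ j - x $ i) = 0"
    unfolding laplacian_mult_vec_diff[OF std x i] using nonneg
    by (subst sum_nonneg_eq_0_iff[symmetric]) auto
  thus "x $ j = x $ i" using ij by (auto simp: digraph_of_iff)
qed

lemma laplacian_max_propagates:
  assumes std: "standardized_laplacian n L" and x: "x \<in> carrier_vec n"
    and U: "U \<subseteq> {..<n}" and iU: "i \<in> U" and max: "\<And>u. u \<in> U \<Longrightarrow> x $ u \<le> x $ i"
    and closed: "\<And>a b. a \<in> U \<Longrightarrow> a \<in> H \<Longrightarrow> (a,b) \<in> digraph_of n L \<Longrightarrow> b \<in> U"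
    and harmonic: "\<And>a. a \<in> H \<Longrightarrow> (L *\<^sub>v x) $ a = 0"
    and path: "(i,v) \<in> {(a,b). (a,b) \<in> digraph_of n L \<and> a \<in> H}\<^sup>*"
  shows "v \<in> U \<and> x $ v = x $ i"
  using path
proof (induction rule: rtrancl_induct)
  case (step w v)
  hence w: "w \<in> U" "x $ w = x $ i" "w \<in> H" and wv: "(w,v) \<in> digraph_of n L" by auto
  have "x $ v = x $ w"
  proof (rule laplacian_local_max(2)[OF std x _ _ harmonic[OF w(3)] wv])
    show "w < n" using w U by auto
    fix j assume "(w,j) \<in> digraph_of n L"
    thus "x $ j \<le> x $ w" using closed[OF w(1) w(3)] max w by auto
  qed
  thus ?case using closed[OF w(1) w(3) wv] w by auto
qed (use iU in auto)

lemma exists_max: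
  fixes f :: "nat \<Rightarrow> real"
  assumes "finite U" "U \<noteq> {}"
  shows "\<exists>i\<in>U. \<forall>u\<in>U. f u \<le> f i"
proof -
  have "Max (f ` U) \<in> f ` U" using assms by simp
  then obtain i where "i \<in> U" "f i = Max (f ` U)" by auto
  moreover have "\<forall>u\<in>U. f u \<le> Max (f ` U)" using assms by simp
  ultimately show ?thesis by metis
qed

lemma laplacian_const_kernel:
  assumes std: "standardized_laplacian n L"
  shows "L *\<^sub>v vec n (\<lambda>_. c) = 0\<^sub>v n"
proof (rule eq_vecI)
  fix a assume "a < dim_vec (0\<^sub>v n)"
  hence a: "a < n" by simp
  have "(L *\<^sub>v vec n (\<lambda>_. c)) $ a = (\<Sum>j<n. L $$ (a,j)) * c"
    using mult_mat_vec_sum[OF laplacian_carrier[OF std] _ a] by (simp add: sum_distrib_right)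
  thus "(L *\<^sub>v vec n (\<lambda>_. c)) $ a = 0\<^sub>v n $ a" using laplacian_row_sum[OF std a] a by simp
qed (use laplacian_carrier[OF std] in auto)

lemma Jmat_carrier[simp]: "Jmat n \<in> carrier_mat n n"
  and Jmat_dims[simp]: "dim_row (Jmat n) = n" "dim_col (Jmat n) = n"
  and Jmat_index[simp]: "i < n \<Longrightarrow> j < n \<Longrightarrow> Jmat n $$ (i,j) = 1 / real n"
  unfolding Jmat_def by auto

lemma Jmat_mult_vec:
  assumes v: "v \<in> carrier_vec n" and i: "i < n"
  shows "(Jmat n *\<^sub>v v) $ i = (\<Sum>j<n. v $ j) / real n"
  using mult_mat_vec_sum[OF Jmat_carrier v i] i by (simp add: sum_divide_distrib)

lemma Kmat_carrier[simp]: "Kmat n \<in> carrier_mat n n"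
  and Kmat_dims[simp]: "dim_row (Kmat n) = n" "dim_col (Kmat n) = n"
  and Kmat_index: "i < n \<Longrightarrow> j < n \<Longrightarrow> Kmat n $$ (i,j) = (if i = j then 1 else 0) - 1 / real n"
  unfolding Kmat_def by auto

lemma complement_laplacian:
  assumes std: "standardized_laplacian n L" and n: "n > 0"
  shows "standardized_laplacian n (Kmat n - L)"
    and "digraph_of n (Kmat n - L) = compl_digraph_of n L"
proof -
  have Lm: "L \<in> carrier_mat n n" by (rule laplacian_carrier[OF std])
  have idx: "(Kmat n - L) $$ (i,j) = (if i = j then 1 else 0) - 1 / real n - L $$ (i,j)"
    if "i < n" "j < n" for i j
    using Lm that by (simp add: Kmat_index)
  show "standardized_laplacian n (Kmat n - L)"
    unfolding standardized_laplacian_def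
  proof (intro conjI allI impI)
    show "Kmat n - L \<in> carrier_mat n n" using Lm by (rule minus_carrier_mat)
  next
    fix i assume i: "i < n"
    have "(\<Sum>j<n. (Kmat n - L) $$ (i, j)) = (\<Sum>j<n. (if i = j then 1 else 0) - 1 / real n - L $$ (i,j))"
      by (rule sum.cong) (simp_all add: idx i)
    also have "\<dots> = 0" using i laplacian_row_sum[OF std i] n by (simp add: sum_subtractf)
    finally show "(\<Sum>j<n. (Kmat n - L) $$ (i, j)) = 0" .
  next
    fix i j assume ij: "i < n" "j < n" "i \<noteq> j"
    have "L $$ (i,j) \<le> 0 \<and> \<bar>L $$ (i,j)\<bar> \<le> 1 / real n"
      using std ij unfolding standardized_laplacian_def by blast
    hence "- (1 / real n) \<le> L $$ (i,j)" "L $$ (i,j) \<le> 0" by auto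
    thus "(Kmat n - L) $$ (i, j) \<le> 0" "\<bar>(Kmat n - L) $$ (i, j)\<bar> \<le> 1 / real n"
      unfolding idx[OF ij(1,2)] using ij(3) by auto
  qed
  show "digraph_of n (Kmat n - L) = compl_digraph_of n L"
    unfolding digraph_of_def compl_digraph_of_def using idx by auto
qed

lemma complement_reflections:
  assumes Lm: "(L :: real mat) \<in> carrier_mat n n"
  shows "Kmat n - L = 1\<^sub>m n - (L + Jmat n)" and "Kmat n - L + Jmat n = 1\<^sub>m n - L"
  by (rule eq_matI; use Lm in \<open>auto simp: Kmat_index\<close>)+

lemma laplacian_mult_J:
  assumes std: "standardized_laplacian n L"
  shows "L * Jmat n = 0\<^sub>m n n"
proof (rule eq_matI)
  have Lm: "L \<in> carrier_mat n n" by (rule laplacian_carrier[OF std])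
  fix i j assume "i < dim_row (0\<^sub>m n n)" "j < dim_col (0\<^sub>m n n)"
  hence i: "i < n" and j: "j < n" by auto
  have "(L * Jmat n) $$ (i,j) = (\<Sum>k<n. L $$ (i,k)) / real n"
    using mult_mat_sum[OF Lm Jmat_carrier i j] j by (simp add: sum_divide_distrib)
  thus "(L * Jmat n) $$ (i,j) = 0\<^sub>m n n $$ (i,j)" using laplacian_row_sum[OF std i] i j by simp
qed (use laplacian_carrier[OF std] in auto)

lemma Jmat_mult_Kmat:
  assumes n: "n > 0"
  shows "Jmat n * Kmat n = 0\<^sub>m n n"
proof (rule eq_matI)
  fix i j assume "i < dim_row (0\<^sub>m n n)" "j < dim_col (0\<^sub>m n n)"
  hence i: "i < n" and j: "j < n" by auto
  have "(Jmat n * Kmat n) $$ (i,j) = (\<Sum>k<n. 1 / real n * Kmat n $$ (k,j))"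
    using mult_mat_sum[OF Jmat_carrier Kmat_carrier i j] i by simp
  also have "\<dots> = (\<Sum>k<n. Kmat n $$ (k,j)) / real n"
    by (simp add: sum_divide_distrib)
  also have "(\<Sum>k<n. Kmat n $$ (k,j)) = (\<Sum>k<n. (if k = j then 1 else 0) - 1 / real n)"
    by (rule sum.cong) (simp_all add: Kmat_index j)
  also have "\<dots> = 0" using j n by (simp add: sum_subtractf)
  finally show "(Jmat n * Kmat n) $$ (i,j) = 0\<^sub>m n n $$ (i,j)" using i j by simp
qed auto

lemma laplacian_mult_K:
  assumes std: "standardized_laplacian n L" and n: "n > 0"
  shows "L * Kmat n = L" and "(L + Jmat n) * Kmat n = L"
proof -
  have Lm: "L \<in> carrier_mat n n" by (rule laplacian_carrier[OF std])
  have "L * Kmat n = L - 0\<^sub>m n n"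
    unfolding Kmat_def using mult_minus_distrib_mat[OF Lm one_carrier_mat Jmat_carrier] Lm
      laplacian_mult_J[OF std] by simp
  also have "\<dots> = L" by (rule eq_matI) (use Lm in auto)
  finally show LK: "L * Kmat n = L" .
  show "(L + Jmat n) * Kmat n = L"
    using add_mult_distrib_mat[OF Lm Jmat_carrier Kmat_carrier] LK Jmat_mult_Kmat[OF n] Lm by simp
qed

section \<open>The maximum principle relative to a minimal reaching set\<close>

locale rooted_laplacian =
  fixes n :: nat and L :: "real mat" and R :: "nat set"
  assumes std: "standardized_laplacian n L"
    and n_pos: "n > 0"
    and reaching_R: "reaching n (digraph_of n L) R"
    and minimal_R: "\<And>r. r \<in> R \<Longrightarrow> \<not> reaching n (digraph_of n L) (R - {r})"
begin

abbreviation E :: "(nat \<times> nat) set" where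
  "E \<equiv> digraph_of n L"

lemma L_carrier: "L \<in> carrier_mat n n" by (rule laplacian_carrier[OF std])

lemma R_bounded: "R \<subseteq> {..<n}" using reaching_R unfolding reaching_def by auto

lemma finite_R: "finite R" using R_bounded finite_subset by blast

lemma path_bounded: "(a,b) \<in> E\<^sup>* \<Longrightarrow> a < n \<Longrightarrow> b < n"
  by (induction rule: rtrancl_induct) (auto simp: digraph_of_iff)

lemma reaches_R: "v < n \<Longrightarrow> \<exists>r\<in>R. (v,r) \<in> E\<^sup>*"
  using reaching_R unfolding reaching_def by auto

(* By minimality, no root reaches another root, so each root is a closed class. *)
lemma no_path_between_roots:
  assumes r: "r \<in> R" and r': "r' \<in> R" and p: "(r,r') \<in> E\<^sup>*"
  shows "r' = r"
proof (rule ccontr)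
  assume ne: "r' \<noteq> r"
  have "reaching n E (R - {r})"
    unfolding reaching_def
  proof (intro conjI allI impI)
    show "R - {r} \<subseteq> {..<n}" using R_bounded by auto
    fix u assume "u < n"
    then obtain t where t: "t \<in> R" "(u,t) \<in> E\<^sup>*" using reaches_R by auto
    show "\<exists>t\<in>R - {r}. (u, t) \<in> E\<^sup>*"
    proof (cases "t = r")
      case True thus ?thesis using t p r' ne by (auto intro: rtrancl_trans)
    qed (use t in auto)
  qed
  thus False using minimal_R[OF r] by auto
qed

lemma path_from_root_returns:
  assumes r: "r \<in> R" and p: "(r,v) \<in> E\<^sup>*"
  shows "(v,r) \<in> E\<^sup>*"
proof -
  have "v < n" using path_bounded[OF p] r R_bounded by auto
  then obtain r' where r': "r' \<in> R" "(v,r') \<in> E\<^sup>*" using reaches_R by auto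
  hence "r' = r" using no_path_between_roots[OF r] p by (meson rtrancl_trans)
  thus ?thesis using r' by auto
qed

definition harmonic :: "real vec \<Rightarrow> bool" where
  "harmonic x \<longleftrightarrow> x \<in> carrier_vec n \<and> (\<forall>a<n. a \<notin> R \<longrightarrow> (L *\<^sub>v x) $ a = 0)"

lemma harmonic_uminus: "harmonic x \<Longrightarrow> harmonic (- x)"
  unfolding harmonic_def using mult_mat_vec_uminus[OF L_carrier] L_carrier by auto

lemma kernel_harmonic: "x \<in> carrier_vec n \<Longrightarrow> L *\<^sub>v x = 0\<^sub>v n \<Longrightarrow> harmonic x"
  unfolding harmonic_def by simp

lemma harmonic_max_at_root:
  assumes x: "harmonic x" and r: "r \<in> R" and p: "(r,v) \<in> E\<^sup>*"
  shows "x $ v \<le> x $ r"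
proof -
  define U where "U = {v. (r,v) \<in> E\<^sup>*}"
  have U: "U \<subseteq> {..<n}" unfolding U_def using path_bounded r R_bounded by blast
  have "r \<in> U" unfolding U_def by auto
  then obtain i where i: "i \<in> U" and max: "\<And>u. u \<in> U \<Longrightarrow> x $ u \<le> x $ i"
    using exists_max[OF finite_subset[OF U], of "\<lambda>u. x $ u"] by auto
  have "(i,r) \<in> E\<^sup>*" using path_from_root_returns[OF r] i unfolding U_def by auto
  from path_to_first[OF this r] obtain r' where r': "r' \<in> R"
    and p': "(i,r') \<in> {(a,b). (a,b) \<in> E \<and> a \<notin> R}\<^sup>*" by auto
  have p'': "(i,r') \<in> {(a,b). (a,b) \<in> E \<and> a \<in> {a. a < n \<and> a \<notin> R}}\<^sup>*"
    by (rule rtrancl_mono[THEN subsetD, OF _ p']) (auto simp: digraph_of_iff)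
  have "r' \<in> U \<and> x $ r' = x $ i"
    by (rule laplacian_max_propagates[OF std _ U i max _ _ p''])
      (use x in \<open>auto simp: U_def harmonic_def\<close>)
  hence "r' = r" and "x $ r' = x $ i"
    using no_path_between_roots[OF r r'] unfolding U_def by auto
  thus ?thesis using max[of v] p unfolding U_def by auto
qed

(* Applying the maximum principle to x and to -x. *)
lemma harmonic_const_from_root:
  assumes x: "harmonic x" and r: "r \<in> R" and p: "(r,v) \<in> E\<^sup>*"
  shows "x $ v = x $ r"
proof -
  have "v < n" "r < n" using path_bounded[OF p] r R_bounded by auto
  thus ?thesis
    using harmonic_max_at_root[OF x r p] harmonic_max_at_root[OF harmonic_uminus[OF x] r p] x
    unfolding harmonic_def by auto
qed

(* At a root, L x is a combination of differences x_j - x_r along arcs leaving r, all of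
   which vanish; so harmonic vectors lie in ker L. *)
lemma harmonic_in_kernel:
  assumes x: "harmonic x"
  shows "L *\<^sub>v x = 0\<^sub>v n"
proof (rule eq_vecI)
  have xc: "x \<in> carrier_vec n" using x unfolding harmonic_def by auto
  fix a assume "a < dim_vec (0\<^sub>v n)"
  hence a: "a < n" by auto
  show "(L *\<^sub>v x) $ a = 0\<^sub>v n $ a"
  proof (cases "a \<in> R")
    case True
    have "L $$ (a,j) * (x $ j - x $ a) = 0" if j: "j < n" for j
    proof (cases "(a,j) \<in> E")
      case True
      thus ?thesis using harmonic_const_from_root[OF x \<open>a \<in> R\<close>, of j] by auto
    qed (use a j in \<open>auto simp: digraph_of_iff\<close>)
    hence "(\<Sum>j<n. L $$ (a,j) * (x $ j - x $ a)) = 0" by (intro sum.neutral) auto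
    thus ?thesis using laplacian_mult_vec_diff[OF std xc a] a by simp
  qed (use x a in \<open>auto simp: harmonic_def\<close>)
qed (use L_carrier in auto)

lemma harmonic_nonpos:
  assumes x: "harmonic x" and zero: "\<And>r. r \<in> R \<Longrightarrow> x $ r = 0" and v: "v < n"
  shows "x $ v \<le> 0"
proof -
  obtain i where i: "i \<in> {..<n}" and max: "\<And>u. u \<in> {..<n} \<Longrightarrow> x $ u \<le> x $ i"
    using exists_max[of "{..<n}" "\<lambda>u. x $ u"] n_pos by auto
  obtain t where t: "t \<in> R" "(i,t) \<in> E\<^sup>*" using reaches_R i by auto
  from path_to_first[OF t(2) t(1)] obtain r' where r': "r' \<in> R"
    and p': "(i,r') \<in> {(a,b). (a,b) \<in> E \<and> a \<notin> R}\<^sup>*" by auto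
  have p'': "(i,r') \<in> {(a,b). (a,b) \<in> E \<and> a \<in> {a. a < n \<and> a \<notin> R}}\<^sup>*"
    by (rule rtrancl_mono[THEN subsetD, OF _ p']) (auto simp: digraph_of_iff)
  have "r' \<in> {..<n} \<and> x $ r' = x $ i"
    by (rule laplacian_max_propagates[OF std _ _ i max _ _ p''])
      (use x in \<open>auto simp: harmonic_def digraph_of_iff\<close>)
  thus ?thesis using zero[OF r'] max v by auto
qed

lemma harmonic_zero:
  assumes x: "harmonic x" and zero: "\<And>r. r \<in> R \<Longrightarrow> x $ r = 0"
  shows "x = 0\<^sub>v n"
proof (rule eq_vecI)
  have xc: "x \<in> carrier_vec n" using x unfolding harmonic_def by auto
  fix v assume "v < dim_vec (0\<^sub>v n)"
  hence v: "v < n" by auto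
  have "(- x) $ v \<le> 0"
    by (rule harmonic_nonpos[OF harmonic_uminus[OF x] _ v]) (use zero R_bounded xc in auto)
  thus "x $ v = 0\<^sub>v n $ v" using harmonic_nonpos[OF x zero v] v xc by auto
qed (use x in \<open>auto simp: harmonic_def\<close>)

section \<open>The kernel of L and of L + J\<close>

(* Replacing the rows of L indexed by R with unit rows gives an invertible matrix:
   a vector in its kernel is harmonic and vanishes on R. *)
definition pinned_mat :: "real mat" where
  "pinned_mat = mat n n (\<lambda>(i,j). if i \<in> R then (if i = j then 1 else 0) else L $$ (i,j))"

lemma pinned_mat_carrier: "pinned_mat \<in> carrier_mat n n"
  unfolding pinned_mat_def by auto

lemma pinned_mat_mult_vec:
  assumes y: "y \<in> carrier_vec n" and i: "i < n"
  shows "(pinned_mat *\<^sub>v y) $ i = (if i \<in> R then y $ i else (L *\<^sub>v y) $ i)"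
proof -
  have "(pinned_mat *\<^sub>v y) $ i
      = (\<Sum>j<n. (if i \<in> R then (if i = j then y $ j else 0) else L $$ (i,j) * y $ j))"
    using mult_mat_vec_sum[OF pinned_mat_carrier y i] by (auto simp: pinned_mat_def i intro!: sum.cong)
  thus ?thesis using mult_mat_vec_sum[OF L_carrier y i] i by auto
qed

lemma det_pinned_mat: "det pinned_mat \<noteq> 0"
proof
  assume "det pinned_mat = 0"
  then obtain v where v: "v \<in> carrier_vec n" "v \<noteq> 0\<^sub>v n" "pinned_mat *\<^sub>v v = 0\<^sub>v n"
    unfolding det_0_iff_vec_prod_zero_field[OF pinned_mat_carrier] by blast
  have pinned: "(if i \<in> R then v $ i else (L *\<^sub>v v) $ i) = 0" if "i < n" for i
    using pinned_mat_mult_vec[OF v(1) that] v(3) that by simp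
  have "v = 0\<^sub>v n"
  proof (rule harmonic_zero)
    have "(L *\<^sub>v v) $ a = 0" if "a < n" "a \<notin> R" for a using pinned[OF that(1)] that(2) by simp
    thus "harmonic v" unfolding harmonic_def using v(1) by blast
    show "v $ r = 0" if "r \<in> R" for r using pinned[of r] that R_bounded by auto
  qed
  with v(2) show False by simp
qed

lemma root_vector_exists:
  assumes r: "r \<in> R"
  shows "\<exists>x. x \<in> carrier_vec n \<and> L *\<^sub>v x = 0\<^sub>v n \<and> (\<forall>r'\<in>R. x $ r' = (if r' = r then 1 else 0))"
proof -
  obtain M where M: "M \<in> carrier_mat n n" and inv: "pinned_mat * M = 1\<^sub>m n"
    using det_non_zero_imp_unit[OF pinned_mat_carrier det_pinned_mat]
    unfolding Units_def by (auto simp: ring_mat_def)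
  define x where "x = M *\<^sub>v unit_vec n r"
  have xc: "x \<in> carrier_vec n" unfolding x_def using M by auto
  have Mx: "pinned_mat *\<^sub>v x = unit_vec n r" unfolding x_def
    using assoc_mult_mat_vec[OF pinned_mat_carrier M, of "unit_vec n r"] inv by auto
  have entries: "(if i \<in> R then x $ i else (L *\<^sub>v x) $ i) = (if i = r then 1 else 0)" if "i < n" for i
    using pinned_mat_mult_vec[OF xc that] Mx r R_bounded that by auto
  have "(L *\<^sub>v x) $ a = 0" if "a < n" "a \<notin> R" for a
    using entries[OF that(1)] that(2) r by (cases "a = r") auto
  hence "L *\<^sub>v x = 0\<^sub>v n" using xc by (intro harmonic_in_kernel) (auto simp: harmonic_def)
  moreover have "\<forall>r'\<in>R. x $ r' = (if r' = r then 1 else 0)"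
    using entries R_bounded by (metis lessThan_iff subsetD)
  ultimately show ?thesis using xc by blast
qed

definition root_vector :: "nat \<Rightarrow> real vec" where
  "root_vector r = (SOME x. x \<in> carrier_vec n \<and> L *\<^sub>v x = 0\<^sub>v n \<and>
     (\<forall>r'\<in>R. x $ r' = (if r' = r then 1 else 0)))"

lemma root_vector:
  assumes "r \<in> R"
  shows "root_vector r \<in> carrier_vec n" "L *\<^sub>v root_vector r = 0\<^sub>v n"
    "\<And>r'. r' \<in> R \<Longrightarrow> root_vector r $ r' = (if r' = r then 1 else 0)"
  using someI_ex[OF root_vector_exists[OF assms]] unfolding root_vector_def[symmetric] by auto

definition root_comb :: "real vec \<Rightarrow> real vec" where
  "root_comb y = vec n (\<lambda>i. \<Sum>r\<in>R. y $ r * root_vector r $ i)"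

lemma root_comb_at_root:
  assumes r: "r \<in> R"
  shows "root_comb y $ r = y $ r"
proof -
  have "(\<Sum>r'\<in>R. y $ r' * root_vector r' $ r) = (\<Sum>r'\<in>R. if r' = r then y $ r else 0)"
    by (rule sum.cong) (auto simp: root_vector(3) r)
  thus ?thesis using r R_bounded finite_R unfolding root_comb_def by auto
qed

lemma root_comb_kernel: "L *\<^sub>v root_comb y = 0\<^sub>v n"
proof (rule eq_vecI)
  fix a assume "a < dim_vec (0\<^sub>v n)"
  hence a: "a < n" by simp
  have "(L *\<^sub>v root_comb y) $ a = (\<Sum>j<n. L $$ (a,j) * (\<Sum>r\<in>R. y $ r * root_vector r $ j))"
    using mult_mat_vec_sum[OF L_carrier _ a] by (simp add: root_comb_def)
  also have "\<dots> = (\<Sum>r\<in>R. y $ r * (\<Sum>j<n. L $$ (a,j) * root_vector r $ j))"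
    by (simp add: sum_distrib_left sum.swap[of _ R] mult_ac)
  also have "\<dots> = 0"
    using mult_mat_vec_sum[OF L_carrier root_vector(1) a] root_vector(2) a
    by (intro sum.neutral) (metis index_zero_vec(1) mult_zero_right)
  finally show "(L *\<^sub>v root_comb y) $ a = 0\<^sub>v n $ a" using a by simp
qed (use L_carrier in \<open>auto simp: root_comb_def\<close>)

lemma kernel_expansion:
  assumes v: "v \<in> carrier_vec n" and Lv: "L *\<^sub>v v = 0\<^sub>v n"
  shows "v = root_comb v"
proof -
  have rc: "root_comb v \<in> carrier_vec n" unfolding root_comb_def by simp
  have "v - root_comb v = 0\<^sub>v n"
  proof (rule harmonic_zero)
    show "harmonic (v - root_comb v)"
      by (rule kernel_harmonic) (use v rc Lv root_comb_kernel mult_minus_distrib_mat_vec[OF L_carrier v rc] in auto)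
    show "(v - root_comb v) $ r = 0" if "r \<in> R" for r
      using that root_comb_at_root[OF that, of v] R_bounded v rc by auto
  qed
  hence "(v - root_comb v) $ i = 0" if "i < n" for i using that by simp
  thus ?thesis using v rc by (intro eq_vecI) auto
qed

theorem kernel_dim_eq_card_roots: "kernel_dim L = card R"
proof (rule kernel_dim_pivot[OF L_carrier finite_R, of root_vector id])
  fix v l assume v: "v \<in> mat_kernel L" and l: "l < n"
  have "v $ l = root_comb v $ l" using kernel_expansion mat_kernelD[OF L_carrier v] by metis
  thus "v $ l = (\<Sum>i\<in>R. v $ id i * root_vector i $ l)" using l by (simp add: root_comb_def)
qed (use root_vector R_bounded in \<open>auto intro: mat_kernelI[OF L_carrier]\<close>)

(* If L w = z with L z = 0, then z is constant on the region
   reachable from each root r, and the maximum principle applied to w on that region gives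
   z_r \<ge> 0; by symmetry z_r = 0, and z is harmonic, hence z = 0. *)
lemma image_nonneg_at_root:
  assumes w: "w \<in> carrier_vec n" and LLw: "L *\<^sub>v (L *\<^sub>v w) = 0\<^sub>v n" and r: "r \<in> R"
  shows "(L *\<^sub>v w) $ r \<ge> 0"
proof -
  define U where "U = {v. (r,v) \<in> E\<^sup>*}"
  have U: "U \<subseteq> {..<n}" unfolding U_def using path_bounded r R_bounded by blast
  have "r \<in> U" unfolding U_def by auto
  then obtain i where i: "i \<in> U" and max: "\<And>u. u \<in> U \<Longrightarrow> w $ u \<le> w $ i"
    using exists_max[OF finite_subset[OF U], of "\<lambda>u. w $ u"] by blast
  have ri: "(r,i) \<in> E\<^sup>*" using i unfolding U_def by blast
  have "(L *\<^sub>v w) $ i \<ge> 0"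
  proof (rule laplacian_local_max(1)[OF std w])
    show "i < n" using i U by blast
    fix j assume "(i,j) \<in> E"
    hence "j \<in> U" using ri unfolding U_def by simp
    thus "w $ j \<le> w $ i" using max by blast
  qed
  moreover have "(L *\<^sub>v w) $ i = (L *\<^sub>v w) $ r"
    by (rule harmonic_const_from_root[OF _ r ri], rule kernel_harmonic) (use L_carrier w LLw in auto)
  ultimately show ?thesis by simp
qed

theorem kernel_square:
  assumes w: "w \<in> carrier_vec n" and LLw: "L *\<^sub>v (L *\<^sub>v w) = 0\<^sub>v n"
  shows "L *\<^sub>v w = 0\<^sub>v n"
proof (rule harmonic_zero)
  show "harmonic (L *\<^sub>v w)" by (rule kernel_harmonic) (use L_carrier w LLw in auto)
  fix r assume r: "r \<in> R"
  have "L *\<^sub>v (L *\<^sub>v (- w)) = 0\<^sub>v n"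
    using LLw mult_mat_vec_uminus[OF L_carrier w] mult_mat_vec_uminus[OF L_carrier, of "L *\<^sub>v w"]
      L_carrier w by auto
  hence "(L *\<^sub>v (- w)) $ r \<ge> 0" using image_nonneg_at_root[OF _ _ r] w by auto
  moreover have "(L *\<^sub>v (- w)) $ r = - ((L *\<^sub>v w) $ r)"
    using mult_mat_vec_uminus[OF L_carrier w] r R_bounded L_carrier by auto
  ultimately show "(L *\<^sub>v w) $ r = 0" using image_nonneg_at_root[OF w LLw r] by simp
qed

(* (L + J) v = 0 iff L v = 0 and v has zero sum: L v = -J v is constant, so L^2 v = 0. *)
lemma kernel_P_iff:
  assumes v: "v \<in> carrier_vec n"
  shows "(L + Jmat n) *\<^sub>v v = 0\<^sub>v n \<longleftrightarrow> L *\<^sub>v v = 0\<^sub>v n \<and> (\<Sum>j<n. v $ j) = 0"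
proof -
  define c where "c = (\<Sum>j<n. v $ j) / real n"
  have J: "Jmat n *\<^sub>v v = vec n (\<lambda>_. c)"
    by (rule eq_vecI) (use Jmat_mult_vec[OF v] in \<open>auto simp: c_def\<close>)
  have Pv: "(L + Jmat n) *\<^sub>v v = L *\<^sub>v v + vec n (\<lambda>_. c)"
    using add_mult_distrib_mat_vec[OF L_carrier Jmat_carrier v] J by simp
  show ?thesis
  proof
    assume P0: "(L + Jmat n) *\<^sub>v v = 0\<^sub>v n"
    have Lv: "L *\<^sub>v v = vec n (\<lambda>_. - c)"
    proof (rule eq_vecI)
      fix i assume "i < dim_vec (vec n (\<lambda>_. - c))"
      hence i: "i < n" by simp
      have "(L *\<^sub>v v + vec n (\<lambda>_. c)) $ i = 0" using P0 Pv i by simp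
      thus "(L *\<^sub>v v) $ i = vec n (\<lambda>_. - c) $ i" using i L_carrier by simp
    qed (use L_carrier in auto)
    have L0: "L *\<^sub>v v = 0\<^sub>v n"
      using kernel_square[OF v] laplacian_const_kernel[OF std, of "- c"] Lv by simp
    hence "c = 0" using Lv n_pos by (metis index_vec index_zero_vec(1) neg_equal_0_iff_equal)
    thus "L *\<^sub>v v = 0\<^sub>v n \<and> (\<Sum>j<n. v $ j) = 0" using L0 n_pos unfolding c_def by simp
  next
    assume "L *\<^sub>v v = 0\<^sub>v n \<and> (\<Sum>j<n. v $ j) = 0"
    thus "(L + Jmat n) *\<^sub>v v = 0\<^sub>v n" unfolding Pv c_def by (auto intro: eq_vecI)
  qed
qed

(* The total mass of the root vectors is n (they sum to the all-ones vector), so some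
   root vector has nonzero mass; subtracting multiples of it balances the others. *)
definition mass :: "nat \<Rightarrow> real" where
  "mass r = (\<Sum>l<n. root_vector r $ l)"

lemma total_mass: "(\<Sum>r\<in>R. mass r) = real n"
proof -
  have "vec n (\<lambda>_. 1::real) = root_comb (vec n (\<lambda>_. 1))"
    by (rule kernel_expansion) (simp_all add: laplacian_const_kernel[OF std])
  have ones: "(\<Sum>r\<in>R. root_vector r $ l) = 1" if l: "l < n" for l
  proof -
    have "(\<Sum>r\<in>R. root_vector r $ l) = (\<Sum>r\<in>R. vec n (\<lambda>_. 1::real) $ r * root_vector r $ l)"
      by (rule sum.cong) (use R_bounded in auto)
    also have "\<dots> = root_comb (vec n (\<lambda>_. 1)) $ l" using l by (simp add: root_comb_def)
    also have "\<dots> = 1" using l \<open>vec n (\<lambda>_. 1) = root_comb (vec n (\<lambda>_. 1))\<close>[symmetric] by simp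
    finally show ?thesis .
  qed
  have "(\<Sum>r\<in>R. mass r) = (\<Sum>l<n. \<Sum>r\<in>R. root_vector r $ l)" unfolding mass_def by (rule sum.swap)
  thus ?thesis using ones by simp
qed

definition pivot_root :: nat where
  "pivot_root = (SOME r. r \<in> R \<and> mass r \<noteq> 0)"

lemma pivot_root: "pivot_root \<in> R" "mass pivot_root \<noteq> 0"
proof -
  have "\<exists>r. r \<in> R \<and> mass r \<noteq> 0"
  proof (rule ccontr)
    assume "\<not> (\<exists>r. r \<in> R \<and> mass r \<noteq> 0)"
    hence "(\<Sum>r\<in>R. mass r) = 0" by simp
    thus False using total_mass n_pos by simp
  qed
  from someI_ex[OF this] show "pivot_root \<in> R" "mass pivot_root \<noteq> 0"
    unfolding pivot_root_def[symmetric] by auto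
qed

definition balanced_vector :: "nat \<Rightarrow> real vec" where
  "balanced_vector r = root_vector r - (mass r / mass pivot_root) \<cdot>\<^sub>v root_vector pivot_root"

lemma balanced_vector_index:
  assumes "r \<in> R" "j < n"
  shows "balanced_vector r $ j
       = root_vector r $ j - mass r / mass pivot_root * root_vector pivot_root $ j"
  using assms root_vector(1)[OF assms(1)] root_vector(1)[OF pivot_root(1)]
  by (simp add: balanced_vector_def)

lemma balanced_vector_kernel:
  assumes r: "r \<in> R"
  shows "balanced_vector r \<in> mat_kernel (L + Jmat n)"
proof -
  let ?c = "mass r / mass pivot_root"
  note x = root_vector[OF r] and x0 = root_vector[OF pivot_root(1)]
  have sx0: "?c \<cdot>\<^sub>v root_vector pivot_root \<in> carrier_vec n" using x0 by simp
  have bc: "balanced_vector r \<in> carrier_vec n" unfolding balanced_vector_def using x x0 by auto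
  have "L *\<^sub>v balanced_vector r = 0\<^sub>v n - ?c \<cdot>\<^sub>v 0\<^sub>v n"
    unfolding balanced_vector_def
    using mult_minus_distrib_mat_vec[OF L_carrier x(1) sx0] mult_mat_vec[OF L_carrier x0(1)] x x0
    by simp
  also have "\<dots> = 0\<^sub>v n" by (rule eq_vecI) auto
  finally have "L *\<^sub>v balanced_vector r = 0\<^sub>v n" .
  moreover have "(\<Sum>j<n. balanced_vector r $ j) = mass r - ?c * mass pivot_root"
    unfolding balanced_vector_def mass_def using x x0
    by (simp add: sum_subtractf sum_distrib_left)
  ultimately show ?thesis using kernel_P_iff[OF bc] pivot_root(2) bc
    by (intro mat_kernelI[of _ n n]) auto
qed

lemma balanced_expansion:
  assumes v: "v \<in> mat_kernel (L + Jmat n)" and l: "l < n"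
  shows "v $ l = (\<Sum>r\<in>R - {pivot_root}. v $ r * balanced_vector r $ l)"
proof -
  let ?r0 = pivot_root and ?R' = "R - {pivot_root}"
  have Pc: "L + Jmat n \<in> carrier_mat n n" using L_carrier by simp
  have vc: "v \<in> carrier_vec n" using mat_kernelD[OF Pc v] by simp
  have Lv: "L *\<^sub>v v = 0\<^sub>v n" and sv: "(\<Sum>j<n. v $ j) = 0"
    using mat_kernelD[OF Pc v] kernel_P_iff[OF vc] by auto
  have exp: "v $ j = (\<Sum>r\<in>R. v $ r * root_vector r $ j)" if "j < n" for j
  proof -
    have "v $ j = root_comb v $ j" by (rule arg_cong[OF kernel_expansion[OF vc Lv]])
    thus ?thesis using that by (simp add: root_comb_def)
  qed
  have "(\<Sum>r\<in>R. v $ r * mass r) = (\<Sum>j<n. \<Sum>r\<in>R. v $ r * root_vector r $ j)"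
    unfolding mass_def sum_distrib_left by (rule sum.swap)
  also have "\<dots> = (\<Sum>j<n. v $ j)" by (rule sum.cong[OF refl]) (simp add: exp[symmetric])
  finally have "(\<Sum>r\<in>R. v $ r * mass r) = (\<Sum>j<n. v $ j)" .
  hence "(\<Sum>r\<in>?R'. v $ r * mass r) + v $ ?r0 * mass ?r0 = 0"
    using sv sum.remove[OF finite_R pivot_root(1), of "\<lambda>r. v $ r * mass r"] by simp
  hence "v $ ?r0 = - (\<Sum>r\<in>?R'. v $ r * mass r) / mass ?r0"
    using pivot_root(2) by (simp add: field_simps)
  hence v0: "v $ ?r0 = - (\<Sum>r\<in>?R'. v $ r * (mass r / mass ?r0))"
    by (simp add: sum_divide_distrib)
  have "v $ l = (\<Sum>r\<in>?R'. v $ r * root_vector r $ l) + v $ ?r0 * root_vector ?r0 $ l"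
    using exp[OF l] sum.remove[OF finite_R pivot_root(1), of "\<lambda>r. v $ r * root_vector r $ l"] by simp
  also have "\<dots> = (\<Sum>r\<in>?R'. v $ r * (root_vector r $ l - mass r / mass ?r0 * root_vector ?r0 $ l))"
    unfolding v0 by (simp add: sum_distrib_right sum_subtractf right_diff_distrib mult.assoc)
  also have "\<dots> = (\<Sum>r\<in>?R'. v $ r * balanced_vector r $ l)"
    using l by (intro sum.cong) (auto simp: balanced_vector_index)
  finally show ?thesis .
qed

theorem kernel_dim_P: "kernel_dim (L + Jmat n) = card R - 1"
proof -
  have "kernel_dim (L + Jmat n) = card (R - {pivot_root})"
  proof (rule kernel_dim_pivot[of _ n n _ balanced_vector id])
    show "L + Jmat n \<in> carrier_mat n n" using L_carrier by simp
    show "finite (R - {pivot_root})" using finite_R by simp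
  next
    fix i assume i: "i \<in> R - {pivot_root}"
    show "balanced_vector i \<in> mat_kernel (L + Jmat n)" using balanced_vector_kernel i by simp
    show "id i < n" using R_bounded i by auto
  next
    fix i j assume "i \<in> R - {pivot_root}" "j \<in> R - {pivot_root}"
    thus "balanced_vector i $ id j = (if i = j then 1 else 0)"
      using root_vector(3) R_bounded pivot_root(1) by (auto simp: balanced_vector_index)
  next
    fix v l assume "v \<in> mat_kernel (L + Jmat n)" "l < n"
    thus "v $ l = (\<Sum>i\<in>R - {pivot_root}. v $ id i * balanced_vector i $ l)"
      using balanced_expansion by simp
  qed
  thus ?thesis using pivot_root(1) finite_R by simp
qed

section \<open>The algebraic multiplicity of the eigenvalue 0\<close>

(* Let T have the root vectors as columns indexed by R and unit columns elsewhere.  Since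
   L kills the root vectors, (lambda I - L) T = B(lambda) D(lambda), where D(lambda) is
   diagonal with lambda on R and B(lambda) takes the columns x_r on R and those of
   lambda I - L elsewhere.  Thus chi_L(lambda) det T = det B(lambda) lambda^|R|, and B(0) is
   invertible, so lambda = 0 is a root of chi_L of multiplicity exactly |R|. *)

lemma sum_over_roots: "(\<Sum>j<n. if j \<in> R then f j else 0) = (\<Sum>j\<in>R. f j)"
proof -
  have "{j \<in> {..<n}. j \<in> R} = R" using R_bounded by auto
  thus ?thesis using sum.inter_filter[of "{..<n}" f "\<lambda>j. j \<in> R"] by simp
qed

definition off_roots :: "real vec \<Rightarrow> real vec" where
  "off_roots y = vec n (\<lambda>j. if j \<in> R then 0 else y $ j)"

definition basis_change :: "real mat" where
  "basis_change = mat n n (\<lambda>(i,j). if j \<in> R then root_vector j $ i else (if i = j then 1 else 0))"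

definition column_mat :: "real \<Rightarrow> real mat" where
  "column_mat lam = mat n n (\<lambda>(i,j). if j \<in> R then root_vector j $ i else lambda_minus n lam L $$ (i,j))"

definition scaling_mat :: "real \<Rightarrow> real mat" where
  "scaling_mat lam = mat n n (\<lambda>(i,j). if i = j then (if j \<in> R then lam else 1) else 0)"

lemma basis_change_carrier: "basis_change \<in> carrier_mat n n"
  and column_mat_carrier: "column_mat lam \<in> carrier_mat n n"
  and scaling_mat_carrier: "scaling_mat lam \<in> carrier_mat n n"
  unfolding basis_change_def column_mat_def scaling_mat_def by auto

lemma basis_change_mult_vec:
  assumes y: "y \<in> carrier_vec n" and i: "i < n"
  shows "(basis_change *\<^sub>v y) $ i = root_comb y $ i + off_roots y $ i"
proof -
  have "(basis_change *\<^sub>v y) $ i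
      = (\<Sum>j<n. (if j \<in> R then y $ j * root_vector j $ i else 0) + (if i = j then off_roots y $ j else 0))"
    unfolding mult_mat_vec_sum[OF basis_change_carrier y i]
    by (intro sum.cong) (auto simp: basis_change_def off_roots_def i)
  thus ?thesis using i by (simp add: sum.distrib sum_over_roots root_comb_def)
qed

lemma det_basis_change: "det basis_change \<noteq> 0"
proof
  assume "det basis_change = 0"
  then obtain y where y: "y \<in> carrier_vec n" "y \<noteq> 0\<^sub>v n" "basis_change *\<^sub>v y = 0\<^sub>v n"
    unfolding det_0_iff_vec_prod_zero_field[OF basis_change_carrier] by blast
  have sum0: "root_comb y $ i + off_roots y $ i = 0" if "i < n" for i
    using basis_change_mult_vec[OF y(1) that] y(3) that by simp
  have yR: "y $ r = 0" if r: "r \<in> R" for r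
    using sum0[of r] root_comb_at_root[OF r] r R_bounded by (auto simp: off_roots_def)
  have "root_comb y = 0\<^sub>v n" unfolding root_comb_def using yR by (intro eq_vecI) auto
  hence "y $ i = 0" if "i < n" for i
    using sum0[OF that] yR that by (cases "i \<in> R") (auto simp: off_roots_def)
  hence "y = 0\<^sub>v n" using y(1) by (intro eq_vecI) auto
  with y(2) show False by simp
qed

lemma factorisation: "lambda_minus n lam L * basis_change = column_mat lam * scaling_mat lam"
proof (rule eq_matI)
  fix i j assume "i < dim_row (column_mat lam * scaling_mat lam)" "j < dim_col (column_mat lam * scaling_mat lam)"
  hence i: "i < n" and j: "j < n" by (auto simp: column_mat_def scaling_mat_def)
  have "(column_mat lam * scaling_mat lam) $$ (i,j)
      = (\<Sum>l<n. if l = j then column_mat lam $$ (i,l) * (if j \<in> R then lam else 1) else 0)"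
    unfolding mult_mat_sum[OF column_mat_carrier[of lam] scaling_mat_carrier[of lam] i j]
    by (intro sum.cong) (auto simp: scaling_mat_def j)
  hence rhs: "(column_mat lam * scaling_mat lam) $$ (i,j)
      = column_mat lam $$ (i,j) * (if j \<in> R then lam else 1)" using j by simp
  have lhs: "(lambda_minus n lam L * basis_change) $$ (i,j)
      = (\<Sum>l<n. lambda_minus n lam L $$ (i,l) * basis_change $$ (l,j))"
    by (rule mult_mat_sum[OF lambda_minus_carrier basis_change_carrier i j])
  show "(lambda_minus n lam L * basis_change) $$ (i,j) = (column_mat lam * scaling_mat lam) $$ (i,j)"
  proof (cases "j \<in> R")
    case True
    have "(\<Sum>l<n. lambda_minus n lam L $$ (i,l) * basis_change $$ (l,j))
        = (\<Sum>l<n. (if i = l then lam * root_vector j $ l else 0) - L $$ (i,l) * root_vector j $ l)"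
      by (rule sum.cong) (auto simp: lambda_minus_def basis_change_def i j True left_diff_distrib)
    also have "\<dots> = lam * root_vector j $ i - (L *\<^sub>v root_vector j) $ i"
      using i mult_mat_vec_sum[OF L_carrier root_vector(1)[OF True] i] by (simp add: sum_subtractf)
    finally show ?thesis unfolding lhs rhs using True root_vector(2)[OF True] i
      by (simp add: column_mat_def j)
  next
    case False
    have "(\<Sum>l<n. lambda_minus n lam L $$ (i,l) * basis_change $$ (l,j))
        = (\<Sum>l<n. if l = j then lambda_minus n lam L $$ (i,l) else 0)"
      by (rule sum.cong) (auto simp: basis_change_def j False)
    thus ?thesis unfolding lhs rhs using False i j by (simp add: column_mat_def)
  qed
qed (auto simp: column_mat_def scaling_mat_def basis_change_def)

lemma char_poly_factorisation:
  "poly (char_poly L) lam * det basis_change = det (column_mat lam) * lam ^ card R"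
proof -
  have "det (scaling_mat lam) = (\<Prod>j<n. if j \<in> R then lam else 1)"
    unfolding scaling_mat_def by (rule det_diagonal)
  also have "\<dots> = lam ^ card R"
  proof -
    have "{j \<in> {..<n}. j \<in> R} = R" using R_bounded by auto
    thus ?thesis using prod.inter_filter[of "{..<n}" "\<lambda>_. lam" "\<lambda>j. j \<in> R"] by simp
  qed
  finally have "det (scaling_mat lam) = lam ^ card R" .
  moreover have "poly (char_poly L) lam * det basis_change
      = det (lambda_minus n lam L * basis_change)"
    using poly_char_poly[OF L_carrier] det_mult[OF lambda_minus_carrier basis_change_carrier] by simp
  ultimately show ?thesis
    unfolding factorisation using det_mult[OF column_mat_carrier[of lam] scaling_mat_carrier[of lam]] by simp
qed

lemma column_mat_0_mult_vec:
  assumes y: "y \<in> carrier_vec n" and i: "i < n"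
  shows "(column_mat 0 *\<^sub>v y) $ i = root_comb y $ i - (L *\<^sub>v off_roots y) $ i"
proof -
  have "(column_mat 0 *\<^sub>v y) $ i
      = (\<Sum>j<n. (if j \<in> R then y $ j * root_vector j $ i else 0) - L $$ (i,j) * off_roots y $ j)"
    unfolding mult_mat_vec_sum[OF column_mat_carrier y i]
    by (intro sum.cong) (auto simp: column_mat_def lambda_minus_def off_roots_def i)
  thus ?thesis using i mult_mat_vec_sum[OF L_carrier _ i, of "off_roots y"]
    by (simp add: sum_subtractf sum_over_roots root_comb_def off_roots_def)
qed

(* B(0) y = 0 means L y' = root_comb y for the part y' of y off R; then L^2 y' = 0, so
   root_comb y = 0, y vanishes on R, and y' is harmonic and zero on R. *)
lemma det_column_mat_0: "det (column_mat 0) \<noteq> 0"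
proof
  assume "det (column_mat 0) = 0"
  then obtain y where y: "y \<in> carrier_vec n" "y \<noteq> 0\<^sub>v n" "column_mat 0 *\<^sub>v y = 0\<^sub>v n"
    unfolding det_0_iff_vec_prod_zero_field[OF column_mat_carrier] by blast
  define y' where "y' = off_roots y"
  have y'c: "y' \<in> carrier_vec n" unfolding y'_def off_roots_def by simp
  have eq: "L *\<^sub>v y' = root_comb y"
    using column_mat_0_mult_vec[OF y(1)] y(3) L_carrier unfolding y'_def
    by (intro eq_vecI) (auto simp: root_comb_def)
  hence "L *\<^sub>v y' = 0\<^sub>v n" using kernel_square[OF y'c] root_comb_kernel by simp
  hence comb0: "root_comb y = 0\<^sub>v n" using eq by simp
  have yR: "y $ r = 0" if "r \<in> R" for r
    using root_comb_at_root[OF that, of y] comb0 that R_bounded by auto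
  have "y' = 0\<^sub>v n"
  proof (rule harmonic_zero)
    show "harmonic y'" using \<open>L *\<^sub>v y' = 0\<^sub>v n\<close> y'c by (rule_tac kernel_harmonic) auto
    show "y' $ r = 0" if "r \<in> R" for r using that R_bounded by (auto simp: y'_def off_roots_def)
  qed
  have "y $ i = 0" if i: "i < n" for i
  proof (cases "i \<in> R")
    case False
    have "y' $ i = 0" using \<open>y' = 0\<^sub>v n\<close> i by simp
    thus ?thesis using False i by (simp add: y'_def off_roots_def)
  qed (use yR in auto)
  hence "y = 0\<^sub>v n" using y(1) by (intro eq_vecI) auto
  with y(2) show False by simp
qed

(* B(lambda) as a matrix of polynomials, to turn the determinant identity into one of
   polynomials. *)
definition column_poly_mat :: "real poly mat" where
  "column_poly_mat = mat n n (\<lambda>(i,j). if j \<in> R then [:root_vector j $ i:]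
     else if i = j then [:- L $$ (i,j), 1:] else [:- L $$ (i,j):])"

lemma poly_det_column_poly_mat: "poly (det column_poly_mat) lam = det (column_mat lam)"
  by (rule poly_det_cong[OF column_mat_carrier])
    (auto simp: column_poly_mat_def column_mat_def lambda_minus_def)

theorem alg_mult_zero: "alg_mult L 0 = card R"
proof -
  let ?B = "det column_poly_mat" and ?k = "card R"
  have "poly (char_poly L * [:det basis_change:]) lam = poly (?B * [:0,1:] ^ ?k) lam" for lam
    using char_poly_factorisation[of lam] poly_det_column_poly_mat[of lam]
    by (simp add: poly_power mult.commute)
  hence id: "char_poly L * [:det basis_change:] = ?B * [:0,1:] ^ ?k"
    by (simp add: poly_eq_poly_eq_iff[symmetric] fun_eq_iff)
  have B0: "poly ?B 0 \<noteq> 0" using poly_det_column_poly_mat det_column_mat_0 by simp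
  hence nz: "?B * [:0,1:] ^ ?k \<noteq> 0" by auto
  have "Polynomial.order 0 (?B * [:0,1:] ^ ?k) = ?k"
    using order_mult[OF nz] order_0I[OF B0] order_power_n_n[of "0::real" ?k] by simp
  moreover have "Polynomial.order 0 (char_poly L * [:det basis_change:]) = alg_mult L 0"
    unfolding alg_mult_def using det_basis_change by (simp add: order_smult)
  ultimately show ?thesis using id by simp
qed

end

section \<open>The characteristic polynomial of L + J\<close>

(* If all rows of Q sum to c then Q S = C(Q) diag(c, 1, ..., 1), where S has first column
   (1,...,1) and columns e_j - e_0 otherwise, and C(Q) has first column (1,...,1) and
   columns Q e_j - Q e_0 otherwise.  Adding J to L does not change C(lambda I - L) but
   lowers the row sum lambda to lambda - 1. *)
definition shear_mat :: "nat \<Rightarrow> real mat" where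
  "shear_mat n = mat n n (\<lambda>(i,j). if j = 0 then 1 else if i = j then 1 else if i = 0 then -1 else 0)"

definition column_diff :: "nat \<Rightarrow> real mat \<Rightarrow> real mat" where
  "column_diff n Q = mat n n (\<lambda>(i,j). if j = 0 then 1 else Q $$ (i,j) - Q $$ (i,0))"

definition corner_mat :: "nat \<Rightarrow> real \<Rightarrow> real mat" where
  "corner_mat n c = mat n n (\<lambda>(i,j). if i = j then (if j = 0 then c else 1) else 0)"

lemma shear_mat_carrier: "shear_mat n \<in> carrier_mat n n"
  and column_diff_carrier: "column_diff n Q \<in> carrier_mat n n"
  and corner_mat_carrier: "corner_mat n c \<in> carrier_mat n n"
  unfolding shear_mat_def column_diff_def corner_mat_def by auto

lemma row_sum_factorisation:
  assumes Q: "Q \<in> carrier_mat n n" and rs: "\<And>i. i < n \<Longrightarrow> (\<Sum>k<n. Q $$ (i,k)) = c"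
  shows "Q * shear_mat n = column_diff n Q * corner_mat n c"
proof (rule eq_matI)
  fix i j assume "i < dim_row (column_diff n Q * corner_mat n c)" "j < dim_col (column_diff n Q * corner_mat n c)"
  hence i: "i < n" and j: "j < n" by (auto simp: column_diff_def corner_mat_def)
  have "(column_diff n Q * corner_mat n c) $$ (i,j)
      = (\<Sum>l<n. if l = j then column_diff n Q $$ (i,l) * (if j = 0 then c else 1) else 0)"
    unfolding mult_mat_sum[OF column_diff_carrier corner_mat_carrier i j]
    by (intro sum.cong) (auto simp: corner_mat_def j)
  hence rhs: "(column_diff n Q * corner_mat n c) $$ (i,j)
      = column_diff n Q $$ (i,j) * (if j = 0 then c else 1)" using j by simp
  have lhs: "(Q * shear_mat n) $$ (i,j) = (\<Sum>l<n. Q $$ (i,l) * shear_mat n $$ (l,j))"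
    by (rule mult_mat_sum[OF Q shear_mat_carrier i j])
  show "(Q * shear_mat n) $$ (i,j) = (column_diff n Q * corner_mat n c) $$ (i,j)"
  proof (cases "j = 0")
    case True
    have "(\<Sum>l<n. Q $$ (i,l) * shear_mat n $$ (l,j)) = (\<Sum>l<n. Q $$ (i,l))"
      by (rule sum.cong) (auto simp: shear_mat_def True)
    thus ?thesis unfolding lhs rhs using rs[OF i] True i by (simp add: column_diff_def)
  next
    case False
    have "(\<Sum>l<n. Q $$ (i,l) * shear_mat n $$ (l,j))
        = (\<Sum>l<n. (if l = j then Q $$ (i,l) else 0) - (if l = 0 then Q $$ (i,l) else 0))"
      by (rule sum.cong) (auto simp: shear_mat_def j False)
    also have "\<dots> = Q $$ (i,j) - Q $$ (i,0)" using j False by (simp add: sum_subtractf)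
    finally show ?thesis unfolding lhs rhs using False i j by (simp add: column_diff_def)
  qed
qed (use Q in \<open>auto simp: shear_mat_def column_diff_def corner_mat_def\<close>)

(* S y = 0 forces y_j = -y_0 for j > 0 and then n y_0 = 0. *)
lemma det_shear_mat:
  assumes n: "n > 0"
  shows "det (shear_mat n) \<noteq> 0"
proof
  assume "det (shear_mat n) = 0"
  then obtain y where y: "y \<in> carrier_vec n" "y \<noteq> 0\<^sub>v n" "shear_mat n *\<^sub>v y = 0\<^sub>v n"
    unfolding det_0_iff_vec_prod_zero_field[OF shear_mat_carrier] by blast
  have row: "(shear_mat n *\<^sub>v y) $ i = (\<Sum>j<n. shear_mat n $$ (i,j) * y $ j)" if "i < n" for i
    using mult_mat_vec_sum[OF shear_mat_carrier y(1) that] .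
  have yi: "y $ i = - y $ 0" if i: "i < n" "i \<noteq> 0" for i
  proof -
    have "(\<Sum>j<n. shear_mat n $$ (i,j) * y $ j)
        = (\<Sum>j<n. (if j = 0 then y $ j else 0) + (if j = i then y $ j else 0))"
      by (rule sum.cong) (auto simp: shear_mat_def i)
    also have "\<dots> = y $ 0 + y $ i" using i n by (simp add: sum.distrib)
    finally show ?thesis using y(3) row[OF i(1)] i by simp
  qed
  have "(\<Sum>j<n. shear_mat n $$ (0,j) * y $ j) = (\<Sum>j<n. y $ 0)"
    by (rule sum.cong) (auto simp: shear_mat_def n yi)
  hence "real n * y $ 0 = 0" using y(3) row[OF n] n by simp
  hence "y $ 0 = 0" using n by simp
  hence "y $ i = 0" if "i < n" for i using yi[OF that] by (cases "i = 0") auto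
  hence "y = 0\<^sub>v n" using y(1) by (intro eq_vecI) auto
  with y(2) show False by simp
qed

lemma det_row_sum:
  assumes Q: "Q \<in> carrier_mat n n" and rs: "\<And>i. i < n \<Longrightarrow> (\<Sum>k<n. Q $$ (i,k)) = c" and n: "n > 0"
  shows "det Q * det (shear_mat n) = det (column_diff n Q) * c"
proof -
  have "det (corner_mat n c) = (\<Prod>j<n. if j = 0 then c else 1)"
    unfolding corner_mat_def by (rule det_diagonal)
  also have "\<dots> = c" using n by (simp add: prod.delta)
  finally show ?thesis
    using det_mult[OF Q shear_mat_carrier] det_mult[OF column_diff_carrier corner_mat_carrier]
      row_sum_factorisation[OF Q rs] by simp
qed

theorem char_poly_plus_J:
  assumes std: "standardized_laplacian n L" and n: "n > 0"
  shows "[:0,1:] * char_poly (L + Jmat n) = [:-1,1:] * char_poly L"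
proof -
  have Lm: "L \<in> carrier_mat n n" by (rule laplacian_carrier[OF std])
  have Pm: "L + Jmat n \<in> carrier_mat n n" using Lm by simp
  have "lam * det (lambda_minus n lam (L + Jmat n)) = (lam - 1) * det (lambda_minus n lam L)" for lam
  proof -
    let ?QL = "lambda_minus n lam L" and ?QP = "lambda_minus n lam (L + Jmat n)"
    have P_index: "(L + Jmat n) $$ (i,j) = L $$ (i,j) + 1 / real n" if "i < n" "j < n" for i j
      using Lm that by simp
    have "(\<Sum>k<n. ?QL $$ (i,k)) = lam" if i: "i < n" for i
      using i laplacian_row_sum[OF std i] by (simp add: lambda_minus_def sum_subtractf)
    hence QL: "det ?QL * det (shear_mat n) = det (column_diff n ?QL) * lam"
      by (rule det_row_sum[OF lambda_minus_carrier _ n])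
    have "(\<Sum>k<n. ?QP $$ (i,k)) = lam - 1" if i: "i < n" for i
      using i laplacian_row_sum[OF std i] n by (simp add: lambda_minus_def P_index sum_subtractf)
    hence "det ?QP * det (shear_mat n) = det (column_diff n ?QP) * (lam - 1)"
      by (rule det_row_sum[OF lambda_minus_carrier _ n])
    moreover have "column_diff n ?QP = column_diff n ?QL"
      by (rule eq_matI) (auto simp: column_diff_def lambda_minus_def P_index)
    ultimately have QP: "det ?QP * det (shear_mat n) = det (column_diff n ?QL) * (lam - 1)"
      by simp
    have "(lam * det ?QP) * det (shear_mat n) = lam * (det (column_diff n ?QL) * (lam - 1))"
      using QP by simp
    also have "\<dots> = (lam - 1) * (det (column_diff n ?QL) * lam)" by simp
    also have "\<dots> = ((lam - 1) * det ?QL) * det (shear_mat n)" using QL by simp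
    finally have "(lam * det ?QP) * det (shear_mat n) = ((lam - 1) * det ?QL) * det (shear_mat n)" .
    thus ?thesis using det_shear_mat[OF n] by simp
  qed
  hence "poly ([:0,1:] * char_poly (L + Jmat n)) = poly ([:-1,1:] * char_poly L)"
    by (intro ext) (simp add: poly_char_poly[OF Lm] poly_char_poly[OF Pm] algebra_simps)
  thus ?thesis by (simp add: poly_eq_poly_eq_iff)
qed

lemma alg_mult_plus_J:
  assumes std: "standardized_laplacian n L" and n: "n > 0"
  shows "alg_mult L 0 = alg_mult (L + Jmat n) 0 + 1"
proof -
  have Lm: "L \<in> carrier_mat n n" by (rule laplacian_carrier[OF std])
  have nzP: "[:0,1:] * char_poly (L + Jmat n) \<noteq> 0"
    unfolding mult_eq_0_iff using char_poly_nonzero[of "L + Jmat n" n] Lm by simp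
  have nzL: "[:-1,1:] * char_poly L \<noteq> 0"
    unfolding mult_eq_0_iff using char_poly_nonzero[OF Lm] by simp
  have "Polynomial.order (0::real) [:0,1:] = 1" using order_power_n_n[of "0::real" 1] by simp
  moreover have "Polynomial.order (0::real) [:-1,1:] = 0" by (rule order_0I) simp
  ultimately show ?thesis
    using order_mult[OF nzP, of 0] order_mult[OF nzL, of 0] char_poly_plus_J[OF std n]
    unfolding alg_mult_def by simp
qed

theorem spectrum_at_zero:
  assumes std: "standardized_laplacian n L" and n: "n > 0"
  defines "d \<equiv> in_forest_dim n (digraph_of n L)"
  shows "alg_mult L 0 = d" and "geom_mult L 0 = d"
    and "alg_mult (L + Jmat n) 0 = d - 1" and "geom_mult (L + Jmat n) 0 = d - 1"
proof -
  let ?E = "digraph_of n L"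
  have "reaching n ?E {..<n}" unfolding reaching_def by auto
  then obtain R where R: "reaching n ?E R" and least: "\<And>R'. reaching n ?E R' \<Longrightarrow> card R \<le> card R'"
    using ex_has_least_nat[of "reaching n ?E" "{..<n}" card] by blast
  have "finite R" using R finite_subset unfolding reaching_def by blast
  hence "\<not> reaching n ?E (R - {r})" if "r \<in> R" for r
    using least[of "R - {r}"] card_Diff1_less[OF _ that] by fastforce
  then interpret rooted_laplacian n L R by unfold_locales (use std n R in auto)
  have d: "d = card R"
    unfolding d_def by (rule in_forest_dim_eq_min_reaching[OF digraph_of_bounded R least])
  have Pm: "L + Jmat n \<in> carrier_mat n n" using L_carrier by simp
  show "alg_mult L 0 = d" unfolding d by (rule alg_mult_zero)
  show "geom_mult L 0 = d"
    unfolding d geom_mult_def char_matrix_0[OF L_carrier] by (rule kernel_dim_eq_card_roots)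
  show "alg_mult (L + Jmat n) 0 = d - 1" using alg_mult_plus_J[OF std n] alg_mult_zero d by simp
  show "geom_mult (L + Jmat n) 0 = d - 1"
    unfolding d geom_mult_def char_matrix_0[OF Pm] by (rule kernel_dim_P)
qed

lemma K_maps_null_vectors:
  assumes std: "standardized_laplacian n L" and n: "n > 0" and v: "v \<in> eigenspace L 0"
  shows "Kmat n *\<^sub>v v \<in> eigenspace (L + Jmat n) 0"
proof -
  have Lm: "L \<in> carrier_mat n n" by (rule laplacian_carrier[OF std])
  have vc: "v \<in> carrier_vec n" and Lv: "L *\<^sub>v v = 0\<^sub>v n"
    using v Lm unfolding eigenspace_def by auto
  have "(L + Jmat n) *\<^sub>v (Kmat n *\<^sub>v v) = L *\<^sub>v v"
    using assoc_mult_mat_vec[OF _ Kmat_carrier vc, of "L + Jmat n" n] laplacian_mult_K(2)[OF std n] Lm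
    by simp
  moreover have "Kmat n *\<^sub>v v \<in> carrier_vec n" by (rule mult_mat_vec_carrier[OF Kmat_carrier vc])
  ultimately show ?thesis using Lv Lm unfolding eigenspace_def by auto
qed

lemma K_maps_fixed_vectors:
  assumes std: "standardized_laplacian n L" and n: "n > 0" and x: "x \<in> eigenspace (L + Jmat n) 1"
  shows "Kmat n *\<^sub>v x \<in> eigenspace L 1"
proof -
  have Lm: "L \<in> carrier_mat n n" by (rule laplacian_carrier[OF std])
  have xc: "x \<in> carrier_vec n" and Px: "(L + Jmat n) *\<^sub>v x = x"
    using x Lm unfolding eigenspace_def by auto
  have "L *\<^sub>v x = x - Jmat n *\<^sub>v x"
  proof (rule eq_vecI)
    fix i assume "i < dim_vec (x - Jmat n *\<^sub>v x)"
    hence i: "i < n" using xc by simp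
    have "(L *\<^sub>v x + Jmat n *\<^sub>v x) $ i = x $ i"
      using Px add_mult_distrib_mat_vec[OF Lm Jmat_carrier xc] by simp
    thus "(L *\<^sub>v x) $ i = (x - Jmat n *\<^sub>v x) $ i" using i xc Lm by simp
  qed (use Lm xc in auto)
  also have "\<dots> = Kmat n *\<^sub>v x"
    unfolding Kmat_def using minus_mult_distrib_mat_vec[OF one_carrier_mat Jmat_carrier xc] xc by simp
  finally have "L *\<^sub>v (Kmat n *\<^sub>v x) = Kmat n *\<^sub>v x"
    using assoc_mult_mat_vec[OF Lm Kmat_carrier xc] laplacian_mult_K(1)[OF std n] by simp
  moreover have "Kmat n *\<^sub>v x \<in> carrier_vec n" by (rule mult_mat_vec_carrier[OF Kmat_carrier xc])
  ultimately show ?thesis using Lm unfolding eigenspace_def by auto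
qed

theorem theorem7:
  fixes n :: nat and L :: "real mat"
  assumes "n > 0"
    and "standardized_laplacian n L"
  defines "P \<equiv> L + Jmat n"
    and "Lc \<equiv> Kmat n - L"
    and "d \<equiv> in_forest_dim n (digraph_of n L)"
    and "dc \<equiv> in_forest_dim n (compl_digraph_of n L)"
  shows
    "alg_mult L 0 = d \<and> alg_mult L 1 = dc - 1 \<and>
     alg_mult P 0 = d - 1 \<and> alg_mult P 1 = dc \<and>
     alg_mult Lc 1 = d - 1 \<and> alg_mult Lc 0 = dc \<and>
     (\<forall>A \<in> {L, P, Lc}. \<forall>ev \<in> {0, 1}. alg_mult A ev > 0 \<longrightarrow> semisimple_eigenvalue A ev) \<and>
     eigenspace P 0 = eigenspace Lc 1 \<and>
     eigenspace P 1 = eigenspace Lc 0 \<and>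
     (\<forall>v \<in> eigenspace L 0. Kmat n *\<^sub>v v \<noteq> 0\<^sub>v n \<longrightarrow> Kmat n *\<^sub>v v \<in> eigenspace P 0) \<and>
     (\<forall>x \<in> eigenspace P 1. Kmat n *\<^sub>v x \<noteq> 0\<^sub>v n \<longrightarrow> Kmat n *\<^sub>v x \<in> eigenspace L 1)"
proof -
  have Lm: "L \<in> carrier_mat n n" by (rule laplacian_carrier[OF assms(2)])
  have Pm: "P \<in> carrier_mat n n" unfolding assms(3) using Lm by simp
  note complement = complement_laplacian[OF assms(2,1)]
  note zero = spectrum_at_zero[OF assms(2,1), folded assms(3) assms(5)]
  note zero_c = spectrum_at_zero[OF complement(1) assms(1), unfolded complement(2), folded assms(4) assms(6)]
  note reflections = complement_reflections[OF Lm, folded assms(3) assms(4)]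
  have one: "alg_mult L 1 = dc - 1" "geom_mult L 1 = dc - 1" "alg_mult P 1 = dc" "geom_mult P 1 = dc"
    "alg_mult Lc 1 = d - 1" "geom_mult Lc 1 = d - 1"
    using alg_mult_reflect[OF Lm, of 0] geom_mult_reflect[OF Lm, of 0]
      alg_mult_reflect[OF Pm, of 0] geom_mult_reflect[OF Pm, of 0]
      alg_mult_reflect[OF Pm, of 1] geom_mult_reflect[OF Pm, of 1] zero zero_c
    unfolding reflections[symmetric] by simp_all
  have "eigenspace P 0 = eigenspace Lc 1" "eigenspace P 1 = eigenspace Lc 0"
    using eigenspace_reflect[OF Pm, of 1] eigenspace_reflect[OF Pm, of 0] unfolding reflections by simp_all
  thus ?thesis
    using zero zero_c one K_maps_null_vectors[OF assms(2,1)] K_maps_fixed_vectors[OF assms(2,1)]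
    unfolding semisimple_eigenvalue_def assms(3) by auto
qed

end
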